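(* Consider the DSA algorithm described in the context, under conditions (a)–(c) on the weights and assuming every $f_{n,i}$ is differentiable and $\mu$-strongly convex with $L$-Lipschitz gradient. Let $\eta\in\left(\frac{L^2q_{\max}}{\mu q_{\min}}+\frac{L^2}{\mu}-L,\infty\right)$ and $\alpha\in(0,\gamma/(2\eta))$. Then for every node $n=1,\dots,N$, the local iterates satisfy $\lim_{t\to\infty}\mathbf{x}_n^t=\tilde{\mathbf{x}}^*$ almost surely. Further, the almost sure convergence is at least of order $\mathcal{O}(1/t)$.
   Context: Problem: a connected network of $N$ nodes; node $n$ holds $q_n$ functions $f_{n,i}:\mathbb{R}^p\to\mathbb{R}$, each differentiable, $\mu$-strongly convex, with $L$-Lipschitz gradient; $f_n:=\frac1{q_n}\sum_i f_{n,i}$, $\tilde{\mathbf{x}}^*:=\arg\min_{\mathbf{x}}\sum_n f_n(\mathbf{x})$; $q_{\min}:=\min_n q_n$, $q_{\max}:=\max_n q_n$. Weights: $\mathbf{W},\tilde{\mathbf{W}}\in\mathbb{R}^{N\times N}$ with entries nonzero only for $m=n$ or $m$ a neighbor of $n$, satisfying (a) symmetry; (b) $\mathrm{null}(\mathbf{I}-\tilde{\mathbf{W}})\supseteq\mathrm{span}(\mathbf{1})$, $\mathrm{null}(\mathbf{I}-\mathbf{W})=\mathrm{span}(\mathbf{1})$, $\mathrm{null}(\tilde{\mathbf{W}}-\mathbf{W})=\mathrm{span}(\mathbf{1})$; (c) $\mathbf{W}\preceq\tilde{\mathbf{W}}\preceq(\mathbf{I}+\mathbf{W})/2$, $\tilde{\mathbf{W}}\succ0$.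 $\mathbf{Z}:=\mathbf{W}\otimes\mathbf{I}_p$, $\tilde{\mathbf{Z}}:=\tilde{\mathbf{W}}\otimes\mathbf{I}_p$; $\gamma$ is the smallest eigenvalue of $\tilde{\mathbf{Z}}$. DSA: stepsize $\alpha>0$, initial $\mathbf{x}_n^0$, $\mathbf{y}_{n,i}^0=\mathbf{x}_n^0$. At each $t\ge0$ node $n$ draws $i_n^t$ uniformly from $\{1,\dots,q_n\}$ independently of the past, sets $\hat{\mathbf{g}}_n^t:=\nabla f_{n,i_n^t}(\mathbf{x}_n^t)-\nabla f_{n,i_n^t}(\mathbf{y}_{n,i_n^t}^t)+\frac1{q_n}\sum_{i}\nabla f_{n,i}(\mathbf{y}_{n,i}^t)$, and $\mathbf{y}_{n,i}^{t+1}=\mathbf{x}_n^t$ if $i=i_n^t$, else $\mathbf{y}_{n,i}^{t+1}=\mathbf{y}_{n,i}^t$. The local update is $\mathbf{x}_n^1=\sum_m w_{nm}\mathbf{x}_m^0-\alpha\hat{\mathbf{g}}_n^0$ and, for $t\ge1$, $\mathbf{x}_n^{t+1}=\mathbf{x}_n^t+\sum_m w_{nm}\mathbf{x}_m^t-\sum_m\tilde w_{nm}\mathbf{x}_m^{t-1}-\alpha[\hat{\mathbf{g}}_n^t-\hat{\mathbf{g}}_n^{t-1}]$. *)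

theory Defs
  imports "HOL-Analysis.Analysis" "HOL-Probability.Probability" "HOL-Library.Landau_Symbols"
begin

definition strongly_convex :: "real \<Rightarrow> ('a::real_inner \<Rightarrow> real) \<Rightarrow> bool" where
  "strongly_convex \<mu> f \<longleftrightarrow>
     (\<forall>x y. \<forall>u::real. 0 \<le> u \<and> u \<le> 1 \<longrightarrow>
        f (u *\<^sub>R x + (1 - u) *\<^sub>R y) \<le> u * f x + (1 - u) * f y - \<mu> / 2 * u * (1 - u) * (norm (x - y))\<^sup>2)"

definition quad :: "('n::finite \<Rightarrow> 'n \<Rightarrow> real) \<Rightarrow> ('n \<Rightarrow> real) \<Rightarrow> real" where
  "quad A v = (\<Sum>n\<in>UNIV. \<Sum>m\<in>UNIV. v n * A n m * v m)"

text \<open>Z~ = W~ (x) I_p acting on stacked vectors X : nodes -> R^p; its eigenvalues,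
  and gamma = the smallest one.\<close>
definition kron_apply :: "('n::finite \<Rightarrow> 'n \<Rightarrow> real) \<Rightarrow> ('n \<Rightarrow> 'a::real_vector) \<Rightarrow> ('n \<Rightarrow> 'a)" where
  "kron_apply A X = (\<lambda>n. \<Sum>m\<in>UNIV. A n m *\<^sub>R X m)"

definition kron_eigenvalues :: "('n::finite \<Rightarrow> 'n \<Rightarrow> real) \<Rightarrow> 'a::real_vector itself \<Rightarrow> real set" where
  "kron_eigenvalues A _ = {e. \<exists>X::'n \<Rightarrow> 'a. (\<exists>n. X n \<noteq> 0) \<and> kron_apply A X = (\<lambda>n. e *\<^sub>R X n)}"

definition min_eig_kron :: "('n::finite \<Rightarrow> 'n \<Rightarrow> real) \<Rightarrow> 'a::real_vector itself \<Rightarrow> real" where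
  "min_eig_kron A T = Min (kron_eigenvalues A T)"

definition dsa_ghat ::
  "('n \<Rightarrow> nat \<Rightarrow> 'a \<Rightarrow> 'a::real_vector) \<Rightarrow> ('n \<Rightarrow> nat) \<Rightarrow> ('n \<Rightarrow> nat \<Rightarrow> 'a) \<Rightarrow> ('n \<Rightarrow> 'a) \<Rightarrow> ('n \<Rightarrow> nat) \<Rightarrow> 'n \<Rightarrow> 'a" where
  "dsa_ghat grad q y x k n =
     grad n (k n) (x n) - grad n (k n) (y n (k n)) + (1 / real (q n)) *\<^sub>R (\<Sum>i<q n. grad n i (y n i))"

text \<open>DSA state after t steps: (x^t, x^(t-1), y^t, hat g^(t-1)), for a realisation
  d t n = i_n^t of the random indices (indices 0..q n - 1 instead of 1..q n).
  At t = 0 the entries for x^(-1), hat g^(-1) are dummies and are not used.\<close>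
primrec dsa ::
  "('n::finite \<Rightarrow> 'n \<Rightarrow> real) \<Rightarrow> ('n \<Rightarrow> 'n \<Rightarrow> real) \<Rightarrow> real \<Rightarrow>
   ('n \<Rightarrow> nat \<Rightarrow> 'a \<Rightarrow> 'a::real_vector) \<Rightarrow> ('n \<Rightarrow> nat) \<Rightarrow> ('n \<Rightarrow> 'a) \<Rightarrow>
   (nat \<Rightarrow> 'n \<Rightarrow> nat) \<Rightarrow> nat \<Rightarrow>
   ('n \<Rightarrow> 'a) \<times> ('n \<Rightarrow> 'a) \<times> ('n \<Rightarrow> nat \<Rightarrow> 'a) \<times> ('n \<Rightarrow> 'a)" where
  "dsa W Wt \<alpha> grad q x0 d 0 = (x0, x0, (\<lambda>n i. x0 n), (\<lambda>n. 0::'a))"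
| "dsa W Wt \<alpha> grad q x0 d (Suc t) =
     (case dsa W Wt \<alpha> grad q x0 d t of (x, xp, y, gp) \<Rightarrow>
        let g = dsa_ghat grad q y x (d t);
            x' = (if t = 0 then (\<lambda>n. (\<Sum>m\<in>UNIV. W n m *\<^sub>R x m) - \<alpha> *\<^sub>R g n)
                  else (\<lambda>n. x n + (\<Sum>m\<in>UNIV. W n m *\<^sub>R x m) - (\<Sum>m\<in>UNIV. Wt n m *\<^sub>R xp m)
                              - \<alpha> *\<^sub>R (g n - gp n)));
            y' = (\<lambda>n i. if i = d t n then x n else y n i)
        in (x', x, y', g))"

definition dsa_x where
  "dsa_x W Wt \<alpha> grad q x0 d t = fst (dsa W Wt \<alpha> grad q x0 d t)"

end

theory Submission
  imports Defs "HOL-Library.Function_Algebras"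
begin

text \<open>Summing the two-step DSA update shows that the stacked iterate X(t) and its running sum
  S(t) = X(0) + ... + X(t) obey the first-order recursion X(t+1) = W~ X(t) - \<alpha> g(t) - (W~ - W) S(t),
  a perturbed primal-dual method; optimality of x* provides S* with (W~ - W) S* = -\<alpha> \<nabla>f(x*).
  The Lyapunov function V(t), the sum of the squared W~-norm of X(t) - x*, the squared
  (W~ - W)-seminorm of S(t) - S* and a multiple of the mean squared distance of the gradient
  tables to x*, satisfies (1 + \<delta>) V(t+1) \<le> V(t) + h(t), where h(t) depends on the current draws
  only through terms whose average over the draw is nonpositive: strong convexity, the
  Lipschitz bound and the conditions on \<eta> and \<alpha> enter exactly here. As each draw is uniform and
  independent of the past, E V(t) \<le> E V(0) / (1 + \<delta>)^t. Hence the series of t E|x_n(t) - x*|^2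
  converges, so almost surely t |x_n(t) - x*|^2 is summable, hence bounded and tending to zero.\<close>

section \<open>Stacked vectors\<close>

definition stack_inner :: "('n::finite \<Rightarrow> 'a::real_inner) \<Rightarrow> ('n \<Rightarrow> 'a) \<Rightarrow> real" where
  "stack_inner X Y = (\<Sum>n\<in>UNIV. X n \<bullet> Y n)"

lemma stack_inner_commute: "stack_inner X Y = stack_inner Y X"
  by (simp add: stack_inner_def inner_commute)

lemma stack_inner_add1: "stack_inner (X + Y) Z = stack_inner X Z + stack_inner Y Z"
  by (simp add: stack_inner_def inner_add_left sum.distrib)
lemma stack_inner_add2: "stack_inner Z (X + Y) = stack_inner Z X + stack_inner Z Y"
  by (simp add: stack_inner_def inner_add_right sum.distrib)
lemma stack_inner_diff2: "stack_inner Z (X - Y) = stack_inner Z X - stack_inner Z Y"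
  by (simp add: stack_inner_def inner_diff_right sum_subtractf)
lemma stack_inner_scale1: "stack_inner (\<lambda>n. c *\<^sub>R X n) Y = c * stack_inner X Y"
  by (simp add: stack_inner_def sum_distrib_left)
lemma stack_inner_scale2: "stack_inner Y (\<lambda>n. c *\<^sub>R X n) = c * stack_inner Y X"
  by (simp add: stack_inner_def sum_distrib_left)
lemma stack_inner_zero1[simp]: "stack_inner 0 Y = 0" by (simp add: stack_inner_def)
lemma stack_inner_zero2[simp]: "stack_inner Y 0 = 0" by (simp add: stack_inner_def)
lemma stack_inner_uminus1: "stack_inner (- X) Y = - stack_inner X Y" by (simp add: stack_inner_def sum_negf)
lemma stack_inner_uminus2: "stack_inner Y (- X) = - stack_inner Y X" by (simp add: stack_inner_def sum_negf)

lemma stack_inner_neg_neg: "stack_inner (- X) (- X) = stack_inner X X"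
  by (simp add: stack_inner_uminus1 stack_inner_uminus2)

lemma stack_inner_nonneg: "0 \<le> stack_inner X X"
  by (simp add: stack_inner_def sum_nonneg)

lemma stack_inner_eq0: "stack_inner X X = 0 \<longleftrightarrow> X = 0"
proof
  assume "stack_inner X X = 0"
  then have "\<forall>n\<in>UNIV. X n \<bullet> X n = 0"
    unfolding stack_inner_def by (subst sum_nonneg_eq_0_iff[symmetric]) auto
  then show "X = 0" by auto
qed simp

lemma stack_inner_ge_comp: "norm (X n) ^ 2 \<le> stack_inner X X"
proof -
  have "X n \<bullet> X n \<le> (\<Sum>m\<in>UNIV. X m \<bullet> X m)"
    by (rule member_le_sum) auto
  then show ?thesis by (simp add: stack_inner_def power2_norm_eq_inner)
qed

lemma young_inner: fixes x y :: "'a::real_inner" assumes "e > 0"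
  shows "2*(x \<bullet> y) \<le> e*(x \<bullet> x) + (y \<bullet> y)/e"
proof -
  have "0 \<le> (e *\<^sub>R x - y) \<bullet> (e *\<^sub>R x - y)" by simp
  then have "2*e*(x \<bullet> y) \<le> e^2*(x \<bullet> x) + (y \<bullet> y)"
    by (simp add: inner_diff_left inner_diff_right inner_commute power2_eq_square algebra_simps)
  then have "2*(x \<bullet> y) \<le> (e^2*(x \<bullet> x) + (y \<bullet> y))/e" using assms by (simp add: field_simps)
  also have "\<dots> = e*(x \<bullet> x) + (y \<bullet> y)/e" using assms by (simp add: field_simps power2_eq_square)
  finally show ?thesis .
qed

lemma stack_inner_young: assumes "e > 0" shows "2 * stack_inner X Y \<le> e * stack_inner X X + stack_inner Y Y / e"
proof -
  have "2 * stack_inner X Y = (\<Sum>n\<in>UNIV. 2*(X n \<bullet> Y n))" by (simp add: stack_inner_def sum_distrib_left)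
  also have "\<dots> \<le> (\<Sum>n\<in>UNIV. e*(X n \<bullet> X n) + (Y n \<bullet> Y n)/e)"
    by (rule sum_mono) (rule young_inner[OF assms])
  also have "\<dots> = e * stack_inner X X + stack_inner Y Y / e"
    by (simp add: stack_inner_def sum.distrib sum_distrib_left sum_divide_distrib)
  finally show ?thesis .
qed

lemma stack_inner_sq2: "stack_inner (X + Y) (X + Y) \<le> 2 * (stack_inner X X + stack_inner Y Y)"
proof -
  have "2 * stack_inner X Y \<le> 1 * stack_inner X X + stack_inner Y Y / 1" by (rule stack_inner_young) simp
  then show ?thesis by (simp add: stack_inner_add1 stack_inner_add2 stack_inner_commute[of Y X])
qed

lemma stack_inner_sq3: "stack_inner (X + Y + Z) (X + Y + Z) \<le> 3 * (stack_inner X X + stack_inner Y Y + stack_inner Z Z)"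
proof -
  have a: "2 * stack_inner X Y \<le> stack_inner X X + stack_inner Y Y" using stack_inner_young[of 1 X Y] by simp
  have b: "2 * stack_inner X Z \<le> stack_inner X X + stack_inner Z Z" using stack_inner_young[of 1 X Z] by simp
  have c: "2 * stack_inner Y Z \<le> stack_inner Y Y + stack_inner Z Z" using stack_inner_young[of 1 Y Z] by simp
  show ?thesis using a b c
    by (simp add: stack_inner_add1 stack_inner_add2 stack_inner_commute[of Y X] stack_inner_commute[of Z X] stack_inner_commute[of Z Y])
qed

abbreviation kron :: "('n::finite \<Rightarrow> 'n \<Rightarrow> real) \<Rightarrow> ('n \<Rightarrow> 'a::real_vector) \<Rightarrow> ('n \<Rightarrow> 'a)"
  where "kron \<equiv> kron_apply"

lemma kron_add: "kron A (X + Y) = kron A X + kron A Y"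
  by (simp add: kron_apply_def fun_eq_iff scaleR_add_right sum.distrib)
lemma kron_diff: "kron A (X - Y) = kron A X - kron A Y"
  by (simp add: kron_apply_def fun_eq_iff scaleR_diff_right sum_subtractf)
lemma kron_scale: "kron A (\<lambda>n. c *\<^sub>R X n) = (\<lambda>n. c *\<^sub>R kron A X n)"
  by (simp add: kron_apply_def fun_eq_iff scaleR_sum_right mult.commute)
lemma kron_zero[simp]: "kron A 0 = 0"
  by (simp add: kron_apply_def fun_eq_iff)
lemma kron_mdiff: "kron (\<lambda>n m. A n m - B n m) X = kron A X - kron B X"
  by (simp add: kron_apply_def fun_eq_iff scaleR_diff_left sum_subtractf)
lemma kron_madd: "kron (\<lambda>n m. A n m + B n m) X = kron A X + kron B X"
  by (simp add: kron_apply_def fun_eq_iff scaleR_add_left sum.distrib)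
lemma kron_mscale: "kron (\<lambda>n m. c * A n m) X = (\<lambda>n. c *\<^sub>R kron A X n)"
  by (simp add: kron_apply_def fun_eq_iff scaleR_sum_right)
lemma kron_id: "kron (\<lambda>n m. if n = m then 1 else 0) X = X"
proof (rule ext)
  fix n
  have "kron (\<lambda>n m. if n = m then 1 else 0) X n = (\<Sum>m\<in>UNIV. if n = m then X m else 0)"
    unfolding kron_apply_def by (rule sum.cong) auto
  then show "kron (\<lambda>n m. if n = m then 1 else 0) X n = X n" by simp
qed

lemma kron_sym: assumes "\<And>n m. A n m = A m n" shows "stack_inner (kron A X) Y = stack_inner X (kron A Y)"
proof -
  have "stack_inner (kron A X) Y = (\<Sum>n\<in>UNIV. \<Sum>m\<in>UNIV. A n m * (X m \<bullet> Y n))"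
    by (simp add: stack_inner_def kron_apply_def inner_sum_left)
  also have "\<dots> = (\<Sum>m\<in>UNIV. \<Sum>n\<in>UNIV. A n m * (X m \<bullet> Y n))" by (rule sum.swap)
  also have "\<dots> = stack_inner X (kron A Y)"
    by (simp add: stack_inner_def kron_apply_def inner_sum_right assms inner_commute)
  finally show ?thesis .
qed

lemma kron_frob_bound: "stack_inner (kron A X) (kron A X) \<le> (\<Sum>n\<in>UNIV. \<Sum>m\<in>UNIV. (A n m)^2) * stack_inner X X"
proof -
  have "kron A X n \<bullet> kron A X n \<le> (\<Sum>m\<in>UNIV. (A n m)^2) * stack_inner X X" for n
  proof -
    have "norm (kron A X n) \<le> (\<Sum>m\<in>UNIV. \<bar>A n m\<bar> * norm (X m))"
      unfolding kron_apply_def by (rule order_trans[OF norm_sum]) simp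
    then have "(norm (kron A X n))^2 \<le> (\<Sum>m\<in>UNIV. \<bar>A n m\<bar> * norm (X m))^2"
      by (simp add: power_mono)
    also have "\<dots> \<le> (\<Sum>m\<in>UNIV. (\<bar>A n m\<bar>)^2) * (\<Sum>m\<in>UNIV. (norm (X m))^2)"
      by (rule Cauchy_Schwarz_ineq_sum)
    also have "\<dots> = (\<Sum>m\<in>UNIV. (A n m)^2) * stack_inner X X"
      by (simp add: stack_inner_def power2_norm_eq_inner)
    finally show ?thesis by (simp add: power2_norm_eq_inner)
  qed
  then have "stack_inner (kron A X) (kron A X) \<le> (\<Sum>n\<in>UNIV. (\<Sum>m\<in>UNIV. (A n m)^2) * stack_inner X X)"
    unfolding stack_inner_def[of "kron A X"] by (rule sum_mono)
  then show ?thesis by (simp add: sum_distrib_right)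
qed

lemma kron_quad_frob_bound: "stack_inner X (kron A X) \<le> (1 + (\<Sum>n\<in>UNIV. \<Sum>m\<in>UNIV. (A n m)^2)) / 2 * stack_inner X X"
proof -
  have "2 * stack_inner X (kron A X) \<le> 1 * stack_inner X X + stack_inner (kron A X) (kron A X) / 1"
    by (rule stack_inner_young) simp
  then show ?thesis using kron_frob_bound[of A X] by (simp add: field_simps)
qed

lemma quad_ip: "quad A v = stack_inner v (kron A v)"
  by (simp add: quad_def stack_inner_def kron_apply_def sum_distrib_left mult.assoc)

lemma stack_inner_basis: "stack_inner X Y = (\<Sum>b\<in>(Basis::'a::euclidean_space set). stack_inner (\<lambda>n. X n \<bullet> b) (\<lambda>n. Y n \<bullet> b))"
proof -
  have "stack_inner X Y = (\<Sum>n\<in>UNIV. \<Sum>b\<in>(Basis::'a set). (X n \<bullet> b) * (Y n \<bullet> b))"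
    unfolding stack_inner_def by (rule sum.cong[OF refl]) (rule euclidean_inner)
  also have "\<dots> = (\<Sum>b\<in>(Basis::'a set). \<Sum>n\<in>UNIV. (X n \<bullet> b) * (Y n \<bullet> b))"
    by (rule sum.swap)
  finally show ?thesis by (simp add: stack_inner_def)
qed

lemma kron_basis: "(kron A X n) \<bullet> b = kron A (\<lambda>n. X n \<bullet> b) n"
  by (simp add: kron_apply_def inner_sum_left)

lemma quad_lift: "stack_inner X (kron A X) = (\<Sum>b\<in>(Basis::'a::euclidean_space set). quad A (\<lambda>n. X n \<bullet> b))"
  by (simp add: stack_inner_basis[of X] quad_ip kron_basis)

section \<open>Rayleigh quotients and the smallest eigenvalue\<close>

lemma quadratic_nonneg_imp_linear_coeff_zero: fixes a b :: real assumes "\<And>s. 0 \<le> 2 * s * a + s^2 * b" shows "a = 0"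
proof (rule ccontr)
  assume "a \<noteq> 0"
  define B where "B = \<bar>b\<bar> + 1"
  have d: "B > 0" "b \<le> B" by (auto simp: B_def)
  define s where "s = - a / B"
  have "0 \<le> 2 * s * a + s^2 * b" by (rule assms)
  also have "s^2 * b \<le> s^2 * B" using d by (simp add: mult_left_mono)
  hence "2 * s * a + s^2 * b \<le> 2 * s * a + s^2 * B" by simp
  also have "2 * s * a + s^2 * B = - (a^2 / B)"
    unfolding s_def using d by (simp add: field_simps power2_eq_square)
  also have "\<dots> < 0" using \<open>a \<noteq> 0\<close> d by simp
  finally show False by simp
qed

lemma stack_inner_mult1: "stack_inner (\<lambda>n. c * (X n::real)) Y = c * stack_inner X Y"
  by (simp add: stack_inner_def sum_distrib_left mult_ac)
lemma stack_inner_mult2: "stack_inner Y (\<lambda>n. c * (X n::real)) = c * stack_inner Y X"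
  by (simp add: stack_inner_def sum_distrib_left mult_ac)
lemma kron_mult: "kron A (\<lambda>n. c * (v n::real)) = (\<lambda>n. c * kron A v n)"
  using kron_scale[of A c v] by simp

lemma minimizer_is_eigenvector:
  fixes A :: "'n::finite \<Rightarrow> 'n \<Rightarrow> real" and v0 :: "'n \<Rightarrow> real"
  assumes sym: "\<And>n m. A n m = A m n"
    and lb: "\<And>v::'n \<Rightarrow> real. c * stack_inner v v \<le> stack_inner v (kron A v)"
    and eq: "stack_inner v0 (kron A v0) = c * stack_inner v0 v0"
  shows "kron A v0 = (\<lambda>n. c * v0 n)"
proof -
  define w where "w = kron A v0 - (\<lambda>n. c * v0 n)"
  have key: "stack_inner w (kron A v0) - c * stack_inner w v0 = stack_inner w w"
    by (simp add: w_def stack_inner_diff2 stack_inner_mult2)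
  have "0 \<le> 2 * s * (stack_inner w w) + s^2 * (stack_inner w (kron A w) - c * stack_inner w w)" for s
  proof -
    define T where "T = (\<lambda>n. s * w n)"
    have "c * stack_inner (v0 + T) (v0 + T) \<le> stack_inner (v0 + T) (kron A (v0 + T))" by (rule lb)
    moreover have "stack_inner (v0 + T) (kron A (v0 + T)) = stack_inner v0 (kron A v0)
        + 2 * s * stack_inner w (kron A v0) + s^2 * stack_inner w (kron A w)"
      using kron_sym[of A, OF sym, of v0 w]
      by (simp add: T_def kron_add kron_mult stack_inner_add1 stack_inner_add2 stack_inner_mult1 stack_inner_mult2 stack_inner_commute[of "kron A w" v0] stack_inner_commute[of "kron A v0" w] power2_eq_square algebra_simps)
    moreover have "stack_inner (v0 + T) (v0 + T) = stack_inner v0 v0 + 2 * s * stack_inner w v0 + s^2 * stack_inner w w"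
      by (simp add: T_def stack_inner_add1 stack_inner_add2 stack_inner_mult1 stack_inner_mult2 stack_inner_commute[of v0 w] power2_eq_square algebra_simps)
    ultimately have "0 \<le> 2 * s * (stack_inner w (kron A v0) - c * stack_inner w v0)
        + s^2 * (stack_inner w (kron A w) - c * stack_inner w w)"
      using eq by (simp add: algebra_simps)
    then show ?thesis using key by simp
  qed
  then have "stack_inner w w = 0" by (rule quadratic_nonneg_imp_linear_coeff_zero)
  then have "w = 0" by (simp add: stack_inner_eq0)
  then show ?thesis by (simp add: w_def fun_eq_iff)
qed

lemma stack_inner_vec: "stack_inner (v::'n::finite \<Rightarrow> real) w = (vec_lambda v) \<bullet> (vec_lambda w)"
  by (simp add: stack_inner_def inner_vec_def)

lemma rayleigh_min_attained:
  fixes A :: "'n::finite \<Rightarrow> 'n \<Rightarrow> real"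
  shows "\<exists>(v0::'n \<Rightarrow> real) l. stack_inner v0 v0 = 1
           \<and> (\<forall>v::'n \<Rightarrow> real. l * stack_inner v v \<le> stack_inner v (kron A v)) \<and> stack_inner v0 (kron A v0) = l"
proof -
  define S where "S = sphere (0::real^'n) 1"
  define f where "f x = stack_inner (vec_nth x) (kron A (vec_nth x))" for x :: "real^'n"
  have cS: "compact S" by (simp add: S_def)
  obtain i :: 'n where True by simp
  have neS: "S \<noteq> {}" using norm_axis_1[of i] by (auto simp: S_def)
  have cf: "continuous_on S f"
    unfolding f_def stack_inner_def kron_apply_def
    by (intro continuous_intros continuous_on_component continuous_on_id)
  obtain x0 where x0: "x0 \<in> S" "\<And>y. y \<in> S \<Longrightarrow> f x0 \<le> f y"
    using continuous_attains_inf[OF cS neS cf] by blast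
  define v0 where "v0 = vec_nth x0"
  define l where "l = f x0"
  have iv0: "stack_inner v0 v0 = 1"
  proof -
    have "stack_inner v0 v0 = x0 \<bullet> x0" by (simp add: v0_def stack_inner_def inner_vec_def)
    also have "\<dots> = 1" using x0(1) by (simp add: S_def dot_square_norm)
    finally show ?thesis .
  qed
  have lb: "l * stack_inner v v \<le> stack_inner v (kron A v)" for v :: "'n \<Rightarrow> real"
  proof (cases "v = 0")
    case True then show ?thesis by simp
  next
    case False
    then have pos: "stack_inner v v > 0" using stack_inner_nonneg[of v] stack_inner_eq0[of v] by linarith
    define s where "s = sqrt (stack_inner v v)"
    have s: "s > 0" "s * s = stack_inner v v" using pos by (auto simp: s_def)
    define x where "x = vec_lambda (\<lambda>n. (1/s) *\<^sub>R v n)"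
    have "x \<bullet> x = (1/s) * (1/s) * stack_inner v v"
      by (simp add: x_def inner_vec_def stack_inner_def sum_distrib_left mult_ac)
    also have "\<dots> = 1" using s pos by (simp add: field_simps)
    finally have "x \<in> S" by (simp add: S_def norm_eq_sqrt_inner)
    then have "l \<le> f x" using x0(2) by (simp add: l_def)
    also have "f x = (1/s) * (1/s) * stack_inner v (kron A v)"
    proof -
      define c where "c = 1/s"
      have vx: "vec_nth x = (\<lambda>n. c * v n)" by (simp add: x_def c_def fun_eq_iff)
      have "f x = c * c * stack_inner v (kron A v)" unfolding f_def vx kron_mult stack_inner_mult1 stack_inner_mult2 by simp
      then show ?thesis by (simp add: c_def)
    qed
    finally have "l \<le> stack_inner v (kron A v) / (s * s)" by simp
    then show ?thesis using s pos by (simp add: pos_le_divide_eq)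
  qed
  have "stack_inner v0 (kron A v0) = l" by (simp add: l_def f_def v0_def)
  then show ?thesis using iv0 lb by blast
qed

lemma rayleigh_min_eigenpair:
  fixes A :: "'n::finite \<Rightarrow> 'n \<Rightarrow> real"
  assumes sym: "\<And>n m. A n m = A m n"
  shows "\<exists>v0 l. stack_inner v0 v0 = 1 \<and> (\<forall>v::'n \<Rightarrow> real. l * stack_inner v v \<le> stack_inner v (kron A v))
           \<and> kron A v0 = (\<lambda>n. l * v0 n)"
proof -
  obtain v0 :: "'n \<Rightarrow> real" and l where v0: "stack_inner v0 v0
      = 1" and lb: "\<And>v::'n \<Rightarrow> real. l * stack_inner v v \<le> stack_inner v (kron A v)"
    and "stack_inner v0 (kron A v0) = l"
    using rayleigh_min_attained[of A] by blast
  then have "stack_inner v0 (kron A v0) = l * stack_inner v0 v0" by simp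
  then have "kron A v0 = (\<lambda>n. l * v0 n)" by (rule minimizer_is_eigenvector[OF sym lb])
  then show ?thesis using v0 lb by blast
qed

lemma finite_real_eigenvalues:
  fixes A :: "'n::finite \<Rightarrow> 'n \<Rightarrow> real"
  assumes sym: "\<And>n m. A n m = A m n"
  shows "finite {e. \<exists>v::'n \<Rightarrow> real. v \<noteq> 0 \<and> kron A v
      = (\<lambda>n. e * v n)}" (is "finite ?E")
proof -
  define ev where "ev e = (SOME v::'n\<Rightarrow>real. v \<noteq> 0 \<and> kron A v = (\<lambda>n. e * v n))" for e
  have ev: "ev e \<noteq> 0 \<and> kron A (ev e) = (\<lambda>n. e * ev e n)" if "e \<in> ?E" for e
  proof -
    from that obtain v where "v \<noteq> 0 \<and> kron A v = (\<lambda>n. e * v n)" by blast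
    then show ?thesis unfolding ev_def by (rule someI[where P="\<lambda>v. v \<noteq> 0 \<and> kron A v
        = (\<lambda>n. e * v n)"])
  qed
  define g where "g e = vec_lambda (ev e)" for e
  have orth: "stack_inner (ev e1) (ev e2) = 0" if "e1 \<in> ?E" "e2 \<in> ?E" "e1 \<noteq> e2" for e1 e2
  proof -
    have "stack_inner (kron A (ev e1)) (ev e2) = stack_inner (ev e1) (kron A (ev e2))" by (rule kron_sym[OF sym])
    then have "e1 * stack_inner (ev e1) (ev e2) = e2 * stack_inner (ev e1) (ev e2)"
      using ev[OF that(1)] ev[OF that(2)] stack_inner_scale1[of e1 "ev e1" "ev e2"] stack_inner_scale2[of "ev e1" e2 "ev e2"]
      by simp
    then show ?thesis using that(3) by simp
  qed
  have "pairwise orthogonal (g ` ?E)"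
  proof -
    { fix x y assume xy: "x \<in> g`?E" "y \<in> g`?E" "x \<noteq> y"
      then obtain e1 e2 where e: "e1\<in>?E" "e2\<in>?E" "x = g e1" "y = g e2" by blast
      with xy(3) have "e1 \<noteq> e2" by auto
      then have "x \<bullet> y = 0" using orth[OF e(1,2)] e(3,4) by (simp add: g_def stack_inner_vec) }
    then show ?thesis unfolding pairwise_def orthogonal_def by blast
  qed
  then have fin: "finite (g ` ?E)" by (rule pairwise_orthogonal_imp_finite)
  have "inj_on g ?E"
  proof (rule inj_onI)
    fix e1 e2 assume a: "e1 \<in> ?E" "e2 \<in> ?E" "g e1 = g e2"
    then have same: "ev e1 = ev e2" by (simp add: g_def vec_lambda_inject)
    from ev[OF a(1)] obtain n where n: "ev e1 n \<noteq> 0" by (auto simp: fun_eq_iff)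
    have "e1 * ev e1 n = e2 * ev e1 n"
      using ev[OF a(1)] ev[OF a(2)] same by (metis)
    then show "e1 = e2" using n by simp
  qed
  then show ?thesis using fin finite_imageD by blast
qed

lemma kron_real: "kron A (v::'n::finite\<Rightarrow>real) n = (\<Sum>m\<in>UNIV. A n m * v m)"
  by (simp add: kron_apply_def)

lemma kron_eigenvalue_real:
  assumes "e \<in> kron_eigenvalues A TYPE('a::euclidean_space)"
  shows "\<exists>v::'n::finite \<Rightarrow> real. v \<noteq> 0 \<and> kron A v = (\<lambda>n. e * v n)"
proof -
  from assms obtain X :: "'n \<Rightarrow> 'a" and n where X: "X n \<noteq> 0" "kron A X = (\<lambda>n. e *\<^sub>R X n)"
    by (auto simp: kron_eigenvalues_def)
  then obtain b where b: "b \<in> Basis" "X n \<bullet> b \<noteq> 0" using euclidean_all_zero_iff by blast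
  define v where "v m = X m \<bullet> b" for m
  have "kron A v = (\<lambda>m. e * v m)"
  proof
    fix m
    have "kron A v m = kron A X m \<bullet> b" by (simp add: kron_basis v_def[abs_def])
    also have "\<dots> = e * v m" by (simp add: X(2) v_def)
    finally show "kron A v m = e * v m" .
  qed
  moreover have "v \<noteq> 0" using b by (auto simp: v_def fun_eq_iff)
  ultimately show ?thesis by blast
qed

lemma real_eigenvalue_kron:
  assumes "v \<noteq> 0" "kron A (v::'n::finite\<Rightarrow>real) = (\<lambda>n. e * v n)"
  shows "e \<in> kron_eigenvalues A TYPE('a::euclidean_space)"
proof -
  obtain b :: 'a where b: "b \<in> Basis" using nonempty_Basis by blast
  then have b0: "b \<noteq> 0" by auto
  define X where "X n = v n *\<^sub>R b" for n
  from assms(1) obtain n where n: "v n \<noteq> 0" by (auto simp: fun_eq_iff)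
  have "kron A X = (\<lambda>n. e *\<^sub>R X n)"
  proof
    fix m
    have "kron A X m = (\<Sum>k\<in>UNIV. A m k * v k) *\<^sub>R b"
      by (simp add: kron_apply_def X_def scaleR_sum_left)
    also have "\<dots> = (e * v m) *\<^sub>R b" using fun_cong[OF assms(2), of m] by (simp add: kron_real)
    finally show "kron A X m = e *\<^sub>R X m" by (simp add: X_def)
  qed
  moreover have "X n \<noteq> 0" using n b0 by (simp add: X_def)
  ultimately show ?thesis unfolding kron_eigenvalues_def by blast
qed

lemma kron_quad_lower_componentwise:
  fixes A :: "'n::finite \<Rightarrow> 'n \<Rightarrow> real" and X :: "'n \<Rightarrow> 'a::euclidean_space"
  assumes "\<And>b. b \<in> Basis \<Longrightarrow>
             c * stack_inner (\<lambda>n. X n \<bullet> b) (\<lambda>n. X n \<bullet> b) \<le> quad A (\<lambda>n. X n \<bullet> b)"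
  shows "c * stack_inner X X \<le> stack_inner X (kron A X)"
proof -
  have "c * stack_inner X X = (\<Sum>b\<in>(Basis::'a set). c * stack_inner (\<lambda>n. X n \<bullet> b) (\<lambda>n. X n \<bullet> b))"
    by (simp add: stack_inner_basis[of X X] sum_distrib_left)
  also have "\<dots> \<le> (\<Sum>b\<in>(Basis::'a set). quad A (\<lambda>n. X n \<bullet> b))"
    by (rule sum_mono) (rule assms)
  also have "\<dots> = stack_inner X (kron A X)" by (simp add: quad_lift)
  finally show ?thesis .
qed

lemma kron_quad_lower_lift:
  fixes A :: "'n::finite \<Rightarrow> 'n \<Rightarrow> real" and X :: "'n \<Rightarrow> 'a::euclidean_space"
  assumes "\<And>v::'n \<Rightarrow> real. c * stack_inner v v \<le> stack_inner v (kron A v)"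
  shows "c * stack_inner X X \<le> stack_inner X (kron A X)"
  by (rule kron_quad_lower_componentwise) (simp add: quad_ip assms)

lemma min_eig_kron_quad_lower:
  fixes A :: "'n::finite \<Rightarrow> 'n \<Rightarrow> real" and X :: "'n \<Rightarrow> 'a::euclidean_space"
  assumes sym: "\<And>n m. A n m = A m n"
  shows "min_eig_kron A TYPE('a) * stack_inner X X \<le> stack_inner X (kron A X)"
proof -
  obtain v0 l where v0: "stack_inner v0 v0 = 1"
      "\<And>v::'n \<Rightarrow> real. l * stack_inner v v \<le> stack_inner v (kron A v)" "kron A v0
          = (\<lambda>n. l * v0 n)"
    using rayleigh_min_eigenpair[of A, OF sym] by blast
  have "v0 \<noteq> 0" using v0(1) by auto
  then have l: "l \<in> kron_eigenvalues A TYPE('a)" using v0(3) by (rule real_eigenvalue_kron)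
  have "kron_eigenvalues A TYPE('a) \<subseteq> {e. \<exists>v::'n \<Rightarrow> real. v \<noteq> 0 \<and> kron A v
      = (\<lambda>n. e * v n)}"
    using kron_eigenvalue_real by blast
  then have "finite (kron_eigenvalues A TYPE('a))"
    using finite_real_eigenvalues[of A, OF sym] finite_subset by blast
  then have "min_eig_kron A TYPE('a) \<le> l" unfolding min_eig_kron_def using l by (rule Min_le)
  then have "min_eig_kron A TYPE('a) * stack_inner X X \<le> l * stack_inner X X"
    using stack_inner_nonneg[of X] by (simp add: mult_right_mono)
  also have "\<dots> \<le> stack_inner X (kron A X)" by (rule kron_quad_lower_lift[OF v0(2)])
  finally show ?thesis .
qed

lemma kron_quad_lower_zero_sum_lift:
  fixes A :: "'n::finite \<Rightarrow> 'n \<Rightarrow> real" and X :: "'n \<Rightarrow> 'a::euclidean_space"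
  assumes "\<And>v::'n \<Rightarrow> real. (\<Sum>n\<in>UNIV. v n) = 0 \<Longrightarrow> c * stack_inner v v
      \<le> stack_inner v (kron A v)"
    and "(\<Sum>n\<in>UNIV. X n) = 0"
  shows "c * stack_inner X X \<le> stack_inner X (kron A X)"
proof (rule kron_quad_lower_componentwise)
  fix b :: 'a
  have "(\<Sum>n\<in>UNIV. X n \<bullet> b) = 0" using assms(2) by (simp add: inner_sum_left[symmetric])
  then show "c * stack_inner (\<lambda>n. X n \<bullet> b) (\<lambda>n. X n \<bullet> b)
      \<le> quad A (\<lambda>n. X n \<bullet> b)"
    by (simp add: quad_ip assms(1))
qed

lemma kron_const_zero:
  fixes A :: "'n::finite \<Rightarrow> 'n \<Rightarrow> real"
  assumes "kron A (\<lambda>n. 1::real) = 0"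
  shows "kron A (\<lambda>n. c) = (0::'n \<Rightarrow> 'a::real_vector)"
proof
  fix n
  have "(\<Sum>m\<in>UNIV. A n m) = 0" using fun_cong[OF assms, of n] by (simp add: kron_apply_def)
  then show "kron A (\<lambda>n. c) n = (0::'n \<Rightarrow> 'a) n" by (simp add: kron_apply_def scaleR_sum_left[symmetric])
qed

lemma kron_colsum_zero:
  fixes A :: "'n::finite \<Rightarrow> 'n \<Rightarrow> real" and X :: "'n \<Rightarrow> 'a::real_vector"
  assumes sym: "\<And>n m. A n m = A m n" and z: "kron A (\<lambda>n. 1::real) = 0"
  shows "(\<Sum>n\<in>UNIV. kron A X n) = 0"
proof -
  have rs: "(\<Sum>n\<in>UNIV. A m n) = 0" for m using fun_cong[OF z, of m] by (simp add: kron_apply_def)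
  have "(\<Sum>n\<in>UNIV. kron A X n) = (\<Sum>n\<in>UNIV. \<Sum>m\<in>UNIV. A n m *\<^sub>R X m)" by (simp add: kron_apply_def)
  also have "\<dots> = (\<Sum>m\<in>UNIV. \<Sum>n\<in>UNIV. A n m *\<^sub>R X m)" by (rule sum.swap)
  also have "\<dots> = (\<Sum>m\<in>UNIV. (\<Sum>n\<in>UNIV. A m n) *\<^sub>R X m)"
    by (simp add: scaleR_sum_left sym)
  also have "\<dots> = 0" by (simp add: rs)
  finally show ?thesis .
qed

section \<open>Positive semidefinite matrices with kernel spanned by \<open>1\<close>\<close>

locale consensus_psd =
  fixes Bm :: "'n::finite \<Rightarrow> 'n \<Rightarrow> real"
  assumes sym: "\<And>n m. Bm n m = Bm m n"
    and psd: "\<And>v::'n \<Rightarrow> real. 0 \<le> stack_inner v (kron Bm v)"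
    and ker: "\<And>v::'n \<Rightarrow> real. kron Bm v = 0 \<longleftrightarrow> (\<exists>c. \<forall>n. v n = c)"
begin

text \<open>Adding the averaging matrix \<open>1 1\<^sup>T / N\<close> removes the kernel; the resulting positive
  definite matrix inverts \<open>Bm\<close> on vectors with zero sum.\<close>
definition Bshift :: "'n \<Rightarrow> 'n \<Rightarrow> real" where "Bshift n m = Bm n m + 1 / real CARD('n)"

lemma Bshift_sym: "Bshift n m = Bshift m n" by (simp add: Bshift_def sym)

lemma kron_Bshift: "kron Bshift (v::'n\<Rightarrow>real) = kron Bm v + (\<lambda>n. (\<Sum>m\<in>UNIV. v m) / real CARD('n))"
  by (simp add: Bshift_def kron_apply_def fun_eq_iff distrib_right sum.distrib sum_divide_distrib)

lemma stack_inner_Bshift: "stack_inner v (kron Bshift (v::'n\<Rightarrow>real)) = stack_inner v (kron Bm v)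
    + (\<Sum>m\<in>UNIV. v m)^2 / real CARD('n)"
proof -
  have "stack_inner v (\<lambda>n. (\<Sum>m\<in>UNIV. v m) / real CARD('n))
      = (\<Sum>n\<in>UNIV. v n) * ((\<Sum>m\<in>UNIV. v m) / real CARD('n))"
    by (simp add: stack_inner_def sum_distrib_right sum_divide_distrib[symmetric])
  then show ?thesis by (simp add: kron_Bshift stack_inner_add2 power2_eq_square)
qed

lemma one_ker: "kron Bm (\<lambda>n. 1::real) = 0" using ker by blast

lemma Bshift_pos: "\<exists>l>0. \<forall>v::'n\<Rightarrow>real. l * stack_inner v v \<le> stack_inner v (kron Bshift v)"
proof -
  obtain v0 l where v0: "stack_inner v0 v0 = 1" "\<And>v::'n \<Rightarrow> real. l * stack_inner v v
      \<le> stack_inner v (kron Bshift v)" "kron Bshift v0 = (\<lambda>n. l * v0 n)"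
    using rayleigh_min_eigenpair[of Bshift, OF Bshift_sym] by blast
  have "l > 0"
  proof (rule ccontr)
    assume "\<not> l > 0"
    have "stack_inner v0 (kron Bshift v0) = l" using v0(1,3) by (simp add: stack_inner_mult2)
    then have le: "stack_inner v0 (kron Bm v0) + (\<Sum>m\<in>UNIV. v0 m)^2 / real CARD('n) \<le> 0"
      using \<open>\<not> l > 0\<close> by (simp add: stack_inner_Bshift)
    have a: "0 \<le> stack_inner v0 (kron Bm v0)" by (rule psd)
    have b: "0 \<le> (\<Sum>m\<in>UNIV. v0 m)^2 / real CARD('n)" by simp
    have q0: "stack_inner v0 (kron Bm v0) = 0" using le a b by linarith
    have s0: "(\<Sum>m\<in>UNIV. v0 m)^2 / real CARD('n) = 0" using le a b by linarith
    have "kron Bm v0 = (\<lambda>n. 0 * v0 n)"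
      by (rule minimizer_is_eigenvector[OF sym]) (use psd q0 in auto)
    then have "kron Bm v0 = 0" by (simp add: fun_eq_iff)
    then obtain c where c: "\<forall>n. v0 n = c" using ker by blast
    have "(\<Sum>m\<in>UNIV. v0 m) = 0" using s0 by simp
    then have "real CARD('n) * c = 0" using c by simp
    then have "c = 0" by simp
    then have "v0 = 0" using c by (simp add: fun_eq_iff)
    then show False using v0(1) by simp
  qed
  then show ?thesis using v0(2) by blast
qed

lemma coercive_on_zero_sum:
  "\<exists>c>0. \<forall>v::'n \<Rightarrow> real. (\<Sum>n\<in>UNIV. v n) = 0 \<longrightarrow> c * stack_inner v v
      \<le> stack_inner v (kron Bm v)"
proof -
  obtain l where l: "l > 0" "\<And>v::'n\<Rightarrow>real. l * stack_inner v v \<le> stack_inner v (kron Bshift v)"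
    using Bshift_pos by blast
  have "stack_inner v (kron Bshift v) = stack_inner v (kron Bm v)" if "(\<Sum>n\<in>UNIV. v n)
      = 0" for v :: "'n \<Rightarrow> real"
    using that by (simp add: stack_inner_Bshift)
  then show ?thesis using l by metis
qed

lemma solvable_zero_sum_real:
  fixes g :: "'n \<Rightarrow> real"
  assumes "(\<Sum>n\<in>UNIV. g n) = 0"
  shows "\<exists>v. kron Bm v = g"
proof -
  obtain l where l: "l > 0" "\<And>v::'n\<Rightarrow>real. l * stack_inner v v \<le> stack_inner v (kron Bshift v)"
    using Bshift_pos by blast
  define F where "F x = vec_lambda (kron Bshift (vec_nth x))" for x :: "real^'n"
  have lin: "linear F"
  proof (rule linearI)
    fix x y :: "real^'n" and c :: real
    have "vec_nth (x + y) = vec_nth x + vec_nth y" by (simp add: fun_eq_iff)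
    then show "F (x + y) = F x + F y" by (simp add: F_def kron_add vec_eq_iff)
    have "vec_nth (c *\<^sub>R x) = (\<lambda>n. c * vec_nth x n)" by (simp add: fun_eq_iff)
    then show "F (c *\<^sub>R x) = c *\<^sub>R F x" by (simp add: F_def kron_mult vec_eq_iff)
  qed
  have "inj F"
  proof (rule injI)
    fix x y assume "F x = F y"
    then have "kron Bshift (vec_nth x) = kron Bshift (vec_nth y)" by (simp add: F_def vec_lambda_inject)
    then have z: "kron Bshift (vec_nth x - vec_nth y) = 0" by (simp add: kron_diff)
    have "l * stack_inner (vec_nth x - vec_nth y) (vec_nth x - vec_nth y) \<le> 0"
      using l(2)[of "vec_nth x - vec_nth y"] z by simp
    then have "stack_inner (vec_nth x - vec_nth y) (vec_nth x - vec_nth y) = 0"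
      using l(1) stack_inner_nonneg[of "vec_nth x - vec_nth y"] by (simp add: mult_le_0_iff)
    then have "vec_nth x - vec_nth y = 0" by (simp add: stack_inner_eq0)
    then show "x = y" by (simp add: vec_eq_iff fun_eq_iff)
  qed
  then have "surj F" using lin linear_inj_imp_surj by blast
  then obtain x where x: "F x = vec_lambda g" by (metis surjD)
  define v where "v = vec_nth x"
  have Mv: "kron Bshift v = g" using x by (simp add: F_def v_def vec_lambda_inject)
  have "(\<Sum>n\<in>UNIV. kron Bshift v n) = (\<Sum>n\<in>UNIV. kron Bm v n) + (\<Sum>m\<in>UNIV. v m)"
    by (simp add: kron_Bshift sum.distrib)
  also have "(\<Sum>n\<in>UNIV. kron Bm v n) = 0" by (rule kron_colsum_zero[OF sym one_ker])
  finally have "(\<Sum>m\<in>UNIV. v m) = 0" using Mv assms by simp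
  then have "kron Bm v = g" using Mv by (simp add: kron_Bshift fun_eq_iff)
  then show ?thesis by blast
qed

lemma solvable_zero_sum:
  fixes G :: "'n \<Rightarrow> 'a::euclidean_space"
  assumes "(\<Sum>n\<in>UNIV. G n) = 0"
  shows "\<exists>S. kron Bm S = G"
proof -
  have "\<forall>b. \<exists>v. b \<in> Basis \<longrightarrow> kron Bm v = (\<lambda>n. G n \<bullet> b)"
  proof
    fix b :: 'a
    have "(\<Sum>n\<in>UNIV. G n \<bullet> b) = 0" using assms by (simp add: inner_sum_left[symmetric])
    then show "\<exists>v. b \<in> Basis \<longrightarrow> kron Bm v = (\<lambda>n. G n \<bullet> b)"
      using solvable_zero_sum_real by blast
  qed
  then obtain vb where vb: "\<And>b. b \<in> Basis \<Longrightarrow> kron Bm (vb b) = (\<lambda>n. G n \<bullet> b)" by metis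
  define S where "S n = (\<Sum>b\<in>(Basis::'a set). vb b n *\<^sub>R b)" for n
  have "kron Bm S = G"
  proof
    fix n
    have "kron Bm S n = (\<Sum>m\<in>UNIV. \<Sum>b\<in>(Basis::'a set). (Bm n m * vb b m) *\<^sub>R b)"
      by (simp add: kron_apply_def S_def scaleR_sum_right)
    also have "\<dots> = (\<Sum>b\<in>(Basis::'a set). \<Sum>m\<in>UNIV. (Bm n m * vb b m) *\<^sub>R b)" by (rule sum.swap)
    also have "\<dots> = (\<Sum>b\<in>(Basis::'a set). kron Bm (vb b) n *\<^sub>R b)"
      by (simp add: kron_apply_def scaleR_sum_left)
    also have "\<dots> = (\<Sum>b\<in>(Basis::'a set). (G n \<bullet> b) *\<^sub>R b)"
      by (rule sum.cong) (simp_all add: vb)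
    also have "\<dots> = G n" by (rule euclidean_representation)
    finally show "kron Bm S n = G n" .
  qed
  then show ?thesis by blast
qed

lemma psd_stack: "0 \<le> stack_inner X (kron Bm (X::'n \<Rightarrow> 'a::euclidean_space))"
  using kron_quad_lower_lift[of 0 Bm X] psd by simp

lemma quad_le_image_sq:
  fixes R :: "'n \<Rightarrow> 'a::euclidean_space"
  assumes "c > 0"
    and "\<And>v::'n \<Rightarrow> real. (\<Sum>n\<in>UNIV. v n) = 0 \<Longrightarrow> c * stack_inner v v
        \<le> stack_inner v (kron Bm v)"
  shows "stack_inner R (kron Bm R) \<le> stack_inner (kron Bm R) (kron Bm R) / c"
proof -
  define mR where "mR = (1 / real CARD('n)) *\<^sub>R (\<Sum>n\<in>UNIV. R n)"
  define Y where "Y = R - (\<lambda>n. mR)"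
  have cz: "kron Bm (\<lambda>n. mR) = 0" by (rule kron_const_zero[OF one_ker])
  have KY: "kron Bm Y = kron Bm R" by (simp add: Y_def kron_diff cz)
  have sY: "(\<Sum>n\<in>UNIV. Y n) = 0" by (simp add: Y_def mR_def sum_subtractf scaleR_sum_left[symmetric])
  have "stack_inner R (kron Bm R) = stack_inner R (kron Bm Y)" using KY by simp
  also have "\<dots> = stack_inner (Y + (\<lambda>n. mR)) (kron Bm Y)" by (simp add: Y_def)
  also have "\<dots> = stack_inner Y (kron Bm Y) + stack_inner (\<lambda>n. mR) (kron Bm Y)" by (rule stack_inner_add1)
  also have "stack_inner (\<lambda>n. mR) (kron Bm Y) = stack_inner (kron Bm (\<lambda>n. mR)) Y"
    by (rule kron_sym[of Bm, OF sym, symmetric])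
  finally have e: "stack_inner R (kron Bm R) = stack_inner Y (kron Bm Y)" by (simp add: cz)
  have a: "c * stack_inner Y Y \<le> stack_inner Y (kron Bm Y)"
    by (rule kron_quad_lower_zero_sum_lift[OF assms(2) sY])
  have b: "2 * stack_inner Y (kron Bm Y) \<le> c * stack_inner Y Y + stack_inner (kron Bm Y) (kron Bm Y) / c"
    by (rule stack_inner_young[OF assms(1)])
  have "stack_inner Y (kron Bm Y) \<le> stack_inner (kron Bm Y) (kron Bm Y) / c" using a b by linarith
  then show ?thesis using e KY by simp
qed

end

section \<open>Strong convexity\<close>

lemma has_derivative_right_quotient:
  fixes f :: "'a::real_normed_vector \<Rightarrow> real"
  assumes der: "(f has_derivative (\<lambda>h. D h)) (at x)" and lin: "linear D"
  shows "((\<lambda>u. (f (x + u *\<^sub>R h) - f x) / u) \<longlongrightarrow> D h) (at_right 0)"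
proof -
  have d1: "((\<lambda>u::real. x + u *\<^sub>R h) has_derivative (\<lambda>u. u *\<^sub>R h)) (at 0 within {0<..})"
    by (auto intro!: derivative_eq_intros)
  have "((\<lambda>u. f (x + u *\<^sub>R h)) has_derivative (\<lambda>u. D (u *\<^sub>R h))) (at 0 within {0<..})"
    using has_derivative_compose[OF d1, of f D] der by simp
  moreover have "(\<lambda>u. D (u *\<^sub>R h)) = (*) (D h)"
    using lin by (auto simp: fun_eq_iff linear_scale)
  ultimately have "((\<lambda>u. f (x + u *\<^sub>R h)) has_field_derivative D h) (at 0 within {0<..})"
    by (simp add: has_field_derivative_def)
  then have "((\<lambda>y. (f (x + y *\<^sub>R h) - f (x + 0 *\<^sub>R h)) / (y - 0)) \<longlongrightarrow> D h) (at 0 within {0<..})"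
    by (simp only: has_field_derivative_iff)
  then show ?thesis by simp
qed

lemma strongly_convex_first_order:
  fixes f :: "'a::real_inner \<Rightarrow> real"
  assumes sc: "strongly_convex \<mu> f"
    and der: "(f has_derivative (\<lambda>h. g \<bullet> h)) (at x)"
  shows "f x + g \<bullet> (y - x) + \<mu>/2 * (norm (y - x))^2 \<le> f y"
proof -
  define h where "h = y - x"
  have lim1: "((\<lambda>u. (f (x + u *\<^sub>R h) - f x) / u) \<longlongrightarrow> g \<bullet> h) (at_right 0)"
    by (rule has_derivative_right_quotient[OF der]) (rule bounded_linear.linear[OF bounded_linear_inner_right])
  have lim2: "((\<lambda>u. f y - f x - \<mu>/2 * (1 - u) * (norm h)^2) \<longlongrightarrow> f y - f x - \<mu>/2 * (1 - 0) * (norm h)^2) (at_right 0)"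
    by (intro tendsto_intros)
  have ev: "\<forall>\<^sub>F u in at_right 0. (f (x + u *\<^sub>R h) - f x) / u \<le> f y - f x
      - \<mu>/2 * (1 - u) * (norm h)^2"
  proof (rule eventually_at_rightI[of 0 1])
    fix u :: real assume u: "u \<in> {0<..<1}"
    have "x + u *\<^sub>R h = u *\<^sub>R y + (1 - u) *\<^sub>R x" by (simp add: h_def algebra_simps)
    moreover have "f (u *\<^sub>R y + (1 - u) *\<^sub>R x) \<le> u * f y + (1 - u) * f x
        - \<mu> / 2 * u * (1 - u) * (norm (y - x))\<^sup>2"
      using sc u unfolding strongly_convex_def by auto
    ultimately have "f (x + u *\<^sub>R h) - f x \<le> u * (f y - f x - \<mu>/2 * (1 - u) * (norm h)^2)"
      by (simp add: h_def algebra_simps)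
    then show "(f (x + u *\<^sub>R h) - f x) / u \<le> f y - f x - \<mu>/2 * (1 - u) * (norm h)^2"
      using u by (simp add: divide_le_eq mult.commute)
  qed simp
  have "g \<bullet> h \<le> f y - f x - \<mu>/2 * (1 - 0) * (norm h)^2"
    by (rule tendsto_le[OF _ lim2 lim1 ev]) simp
  then show ?thesis by (simp add: h_def)
qed

lemma strongly_convex_gradient_monotone:
  fixes f :: "'a::real_inner \<Rightarrow> real"
  assumes sc: "strongly_convex \<mu> f"
    and der: "\<And>z. (f has_derivative (\<lambda>h. g z \<bullet> h)) (at z)"
  shows "\<mu> * (norm (x - y))^2 \<le> (g x - g y) \<bullet> (x - y)"
proof -
  have a: "f x + g x \<bullet> (y - x) + \<mu>/2 * (norm (y - x))^2
      \<le> f y" by (rule strongly_convex_first_order[OF sc der])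
  have b: "f y + g y \<bullet> (x - y) + \<mu>/2 * (norm (x - y))^2
      \<le> f x" by (rule strongly_convex_first_order[OF sc der])
  have "norm (y - x) = norm (x - y)" by (rule norm_minus_commute)
  moreover have "g x \<bullet> (y - x) = - (g x \<bullet> (x - y))" by (simp add: inner_diff_right)
  ultimately show ?thesis using a b by (simp add: inner_diff_left)
qed

lemma gradient_zero_at_minimum:
  fixes F :: "'a::real_inner \<Rightarrow> real"
  assumes der: "(F has_derivative (\<lambda>h. g \<bullet> h)) (at x)"
    and mn: "\<And>z. F x \<le> F z"
  shows "g = 0"
proof -
  have lim: "((\<lambda>u. (F (x + u *\<^sub>R (- g)) - F x) / u) \<longlongrightarrow> g \<bullet> (- g)) (at_right 0)"
    by (rule has_derivative_right_quotient[OF der]) (rule bounded_linear.linear[OF bounded_linear_inner_right])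
  have ev: "\<forall>\<^sub>F u in at_right 0. 0 \<le> (F (x + u *\<^sub>R (- g)) - F x) / u"
    by (rule eventually_at_rightI[of 0 1]) (auto intro: divide_nonneg_pos simp: mn)
  have "0 \<le> g \<bullet> (- g)" by (rule tendsto_lowerbound[OF lim ev]) simp
  then have "g \<bullet> g \<le> 0" by simp
  then show ?thesis using inner_ge_zero[of g] by (simp add: order_antisym)
qed

section \<open>The DSA recursion\<close>

locale dsa_setting =
  fixes W Wt :: "'n::finite \<Rightarrow> 'n \<Rightarrow> real"
    and q :: "'n \<Rightarrow> nat"
    and f :: "'n \<Rightarrow> nat \<Rightarrow> 'a::euclidean_space \<Rightarrow> real"
    and grad :: "'n \<Rightarrow> nat \<Rightarrow> 'a \<Rightarrow> 'a"
    and \<mu> L \<eta> \<alpha> :: real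
    and xstar :: 'a
    and x0 :: "'n \<Rightarrow> 'a"
  assumes W_sym: "\<And>n m. W n m = W m n"
    and Wt_sym: "\<And>n m. Wt n m = Wt m n"
    and null_Wt: "\<And>v::'n \<Rightarrow> real. (\<exists>c. \<forall>n. v n = c)
        \<Longrightarrow> (\<forall>n. v n - (\<Sum>m\<in>UNIV. Wt n m * v m) = 0)"
    and null_W: "\<And>v::'n \<Rightarrow> real. (\<forall>n. v n - (\<Sum>m\<in>UNIV. W n m * v m) = 0) \<longleftrightarrow> (\<exists>c. \<forall>n. v n = c)"
    and null_WtW: "\<And>v::'n \<Rightarrow> real. (\<forall>n. (\<Sum>m\<in>UNIV. (Wt n m - W n m) * v m) = 0) \<longleftrightarrow> (\<exists>c. \<forall>n. v n = c)"
    and W_le_Wt: "\<And>v. quad W v \<le> quad Wt v"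
    and Wt_le: "\<And>v. quad Wt v \<le> quad (\<lambda>n m. ((if n = m then 1 else 0) + W n m) / 2) v"
    and q_pos: "\<And>n. q n \<ge> 1"
    and \<mu>_pos: "\<mu> > 0"
    and f_grad: "\<And>n i x. i < q n \<Longrightarrow> (f n i has_derivative (\<lambda>h. grad n i x \<bullet> h)) (at x)"
    and f_sc: "\<And>n i. i < q n \<Longrightarrow> strongly_convex \<mu> (f n i)"
    and f_lip: "\<And>n i. i < q n \<Longrightarrow> L-lipschitz_on UNIV (grad n i)"
    and xstar_min: "\<And>x. (\<Sum>n\<in>UNIV. (1 / real (q n)) * (\<Sum>i<q n. f n i xstar))
                        \<le> (\<Sum>n\<in>UNIV. (1 / real (q n)) * (\<Sum>i<q n. f n i x))"
    and \<eta>_gt: "\<eta> > L\<^sup>2 * real (Max (range q)) / (\<mu> * real (Min (range q))) + L\<^sup>2 / \<mu> - L"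
    and \<alpha>_pos: "\<alpha> > 0"
    and \<alpha>_lt: "\<alpha> < min_eig_kron Wt TYPE('a) / (2 * \<eta>)"
begin

text \<open>\<open>Bm = W~ - W\<close> and \<open>Cm = I + W - 2 W~\<close> are positive semidefinite by condition (c).\<close>
definition Bm :: "'n \<Rightarrow> 'n \<Rightarrow> real" where "Bm n m = Wt n m - W n m"
definition Cm :: "'n \<Rightarrow> 'n \<Rightarrow> real" where "Cm n m = (if n = m then 1 else 0) + W n m - 2 * Wt n m"

definition X where "X d t = dsa_x W Wt \<alpha> grad q x0 d t"
definition Yt where "Yt d t = fst (snd (snd (dsa W Wt \<alpha> grad q x0 d t)))"
definition gh where "gh d t = dsa_ghat grad q (Yt d t) (X d t) (d t)"
definition S where "S d t = (\<lambda>n. \<Sum>s\<le>t. X d s n)"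

lemma dsa_Suc: "dsa W Wt \<alpha> grad q x0 d (Suc t) = (X d (Suc t), X d t, Yt d (Suc t), gh d t)"
proof -
  obtain x xp y gp where st: "dsa W Wt \<alpha> grad q x0 d t
      = (x, xp, y, gp)" by (cases "dsa W Wt \<alpha> grad q x0 d t") auto
  then have "X d t = x" "Yt d t = y" by (simp_all add: X_def Yt_def dsa_x_def)
  then show ?thesis using st by (simp add: X_def Yt_def gh_def dsa_x_def Let_def)
qed

lemma Yt_Suc: "Yt d (Suc t) = (\<lambda>n i. if i = d t n then X d t n else Yt d t n i)"
proof -
  obtain x xp y gp where st: "dsa W Wt \<alpha> grad q x0 d t
      = (x, xp, y, gp)" by (cases "dsa W Wt \<alpha> grad q x0 d t") auto
  have xy: "X d t = x" "Yt d t = y" using st by (simp_all add: X_def Yt_def dsa_x_def)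
  show ?thesis unfolding xy using st by (simp add: Yt_def[of d "Suc t"] Let_def)
qed

lemma X_1: "X d (Suc 0) = (\<lambda>n. (\<Sum>m\<in>UNIV. W n m *\<^sub>R X d 0 m) - \<alpha> *\<^sub>R gh d 0 n)"
  by (simp add: X_def dsa_x_def gh_def Yt_def Let_def)

lemma X_SS: "X d (Suc (Suc t)) = (\<lambda>n. X d (Suc t) n + (\<Sum>m\<in>UNIV. W n m *\<^sub>R X d (Suc t) m)
     - (\<Sum>m\<in>UNIV. Wt n m *\<^sub>R X d t m) - \<alpha> *\<^sub>R (gh d (Suc t) n - gh d t n))"
proof -
  have "dsa W Wt \<alpha> grad q x0 d (Suc (Suc t)) = (case (X d (Suc t), X d t, Yt d (Suc t), gh d t) of (x, xp, y, gp) \<Rightarrow>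
        let g = dsa_ghat grad q y x (d (Suc t));
            x' = (if Suc t = 0 then (\<lambda>n. (\<Sum>m\<in>UNIV. W n m *\<^sub>R x m) - \<alpha> *\<^sub>R g n)
                  else (\<lambda>n. x n + (\<Sum>m\<in>UNIV. W n m *\<^sub>R x m) - (\<Sum>m\<in>UNIV. Wt n m *\<^sub>R xp m)
                              - \<alpha> *\<^sub>R (g n - gp n)));
            y' = (\<lambda>n i. if i = d (Suc t) n then x n else y n i)
        in (x', x, y', g))"
    by (subst dsa.simps(2)) (simp only: dsa_Suc)
  then show ?thesis by (simp add: X_def[of d "Suc (Suc t)"] dsa_x_def gh_def[of d "Suc t"] Let_def)
qed

lemma dsa_cong_past: "(\<And>s. s < t \<Longrightarrow> d s = d' s) \<Longrightarrow> dsa W Wt \<alpha> grad q x0 d t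
    = dsa W Wt \<alpha> grad q x0 d' t"
proof (induction t)
  case 0 show ?case by simp
next
  case (Suc t)
  have ih: "dsa W Wt \<alpha> grad q x0 d t = dsa W Wt \<alpha> grad q x0 d' t" using Suc by simp
  have dt: "d t = d' t" using Suc.prems by simp
  show ?case by (simp only: dsa.simps(2) ih dt)
qed

lemma X_cong_past: "(\<And>s. s < t \<Longrightarrow> d s = d' s) \<Longrightarrow> X d t = X d' t"
  unfolding X_def dsa_x_def by (subst dsa_cong_past[of t d d']) auto
lemma Yt_cong_past: "(\<And>s. s < t \<Longrightarrow> d s = d' s) \<Longrightarrow> Yt d t = Yt d' t"
  unfolding Yt_def by (subst dsa_cong_past[of t d d']) auto
lemma S_cong_past: assumes "\<And>s. s < t \<Longrightarrow> d s = d' s" shows "S d t = S d' t"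
proof -
  have "X d u = X d' u" if "u \<le> t" for u using that assms by (intro X_cong_past) auto
  then show ?thesis unfolding S_def by (intro ext sum.cong) auto
qed

lemma kron_Bm: "kron Bm Z = kron Wt Z - kron W Z" by (simp add: Bm_def[abs_def] kron_mdiff)

lemma X_Suc: "X d (Suc t) = kron Wt (X d t) - (\<lambda>n. \<alpha> *\<^sub>R gh d t n) - kron Bm (S d t)"
proof (induction t)
  case 0
  have "S d 0 = X d 0" by (simp add: S_def)
  then have "kron Bm (S d 0) = kron Wt (X d 0) - kron W (X d 0)" by (simp add: kron_Bm)
  then show ?case by (simp add: X_1 kron_apply_def fun_eq_iff)
next
  case (Suc t)
  have SS: "S d (Suc t) = S d t + X d (Suc t)" by (simp add: S_def fun_eq_iff)
  have KB: "kron Bm Z = kron Wt Z - kron W Z" for Z :: "'n \<Rightarrow> 'a" by (rule kron_Bm)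
  show ?case
  proof
    fix n
    have e1: "X d (Suc (Suc t)) n = X d (Suc t) n + kron W (X d (Suc t)) n - kron Wt (X d t) n
        - \<alpha> *\<^sub>R (gh d (Suc t) n - gh d t n)"
      by (simp add: X_SS kron_apply_def)
    have e2: "X d (Suc t) n = kron Wt (X d t) n - \<alpha> *\<^sub>R gh d t n - kron Bm (S d t) n"
      using fun_cong[OF Suc.IH, of n] by simp
    have e3: "(kron Wt (X d (Suc t)) - (\<lambda>n. \<alpha> *\<^sub>R gh d (Suc t) n) - kron Bm (S d (Suc t))) n
       = kron W (X d (Suc t)) n - kron Bm (S d t) n - \<alpha> *\<^sub>R gh d (Suc t) n"
      by (simp add: SS kron_add kron_Bm)
    show "X d (Suc (Suc t)) n = (kron Wt (X d (Suc t)) - (\<lambda>n. \<alpha> *\<^sub>R gh d (Suc t) n) - kron Bm (S d (Suc t))) n"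
      unfolding e3 e1 using e2 by (simp add: algebra_simps)
  qed
qed

end

section \<open>An abstract descent inequality\<close>

lemma lyapunov_identity:
  fixes D D' Dl R R' g Z :: "'n::finite \<Rightarrow> 'a::euclidean_space"
    and Wt Bm Cm :: "'n \<Rightarrow> 'n \<Rightarrow> real"
  assumes symWt: "\<And>n m. Wt n m = Wt m n" and symB: "\<And>n m. Bm n m = Bm m n"
    and D': "D' = D + Dl"
    and R': "R' = R + D' + Z" and Z: "kron Bm Z = 0"
    and rel: "kron Bm R' = - kron Wt Dl - kron Cm D' - (\<lambda>n. \<alpha> *\<^sub>R g n)"
  shows "stack_inner D' (kron Wt D') + stack_inner R' (kron Bm R') = stack_inner D (kron Wt D) + stack_inner R (kron Bm R)
      - stack_inner Dl (kron Wt Dl) - 2 * stack_inner D' (kron Cm D') - stack_inner D' (kron Bm D') - 2 * \<alpha> * stack_inner D' g"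
proof -
  have sW: "stack_inner (kron Wt X) Y = stack_inner X (kron Wt Y)" for X Y :: "'n \<Rightarrow> 'a"
    by (rule kron_sym[of Wt, OF symWt])
  have sB: "stack_inner (kron Bm X) Y = stack_inner X (kron Bm Y)" for X Y :: "'n \<Rightarrow> 'a"
    by (rule kron_sym[of Bm, OF symB])
  have ZB: "stack_inner Z (kron Bm Y) = 0" for Y :: "'n \<Rightarrow> 'a" using sB[of Z Y] Z by simp
  have ag: "\<alpha> * stack_inner D' g = - stack_inner D' (kron Wt Dl) - stack_inner D' (kron Cm D')
      - stack_inner D' (kron Bm R')"
  proof -
    have "(\<lambda>n. \<alpha> *\<^sub>R g n) = - kron Wt Dl - kron Cm D'
        - kron Bm R'" using rel by (simp add: algebra_simps)
    then have "stack_inner D' (\<lambda>n. \<alpha> *\<^sub>R g n) = stack_inner D' (- kron Wt Dl - kron Cm D' - kron Bm R')"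
      by simp
    then show ?thesis by (simp add: stack_inner_scale2 stack_inner_diff2 stack_inner_uminus2)
  qed
  have KR': "kron Bm R' = kron Bm R + kron Bm D'" by (simp add: R' kron_add Z)
  have e1: "stack_inner D' (kron Bm R') = stack_inner D' (kron Bm R) + stack_inner D' (kron Bm D')"
    by (simp add: KR' stack_inner_add2)
  have e2: "stack_inner R' (kron Bm R') = stack_inner R (kron Bm R) + 2 * stack_inner D' (kron Bm R)
      + stack_inner D' (kron Bm D')"
  proof -
    have "stack_inner R' (kron Bm R') = stack_inner (R + D' + Z) (kron Bm R + kron Bm D')" unfolding KR' by (simp add: R')
    also have "\<dots> = stack_inner R (kron Bm R) + stack_inner R (kron Bm D') + stack_inner D' (kron Bm R)
        + stack_inner D' (kron Bm D')"
      by (simp add: stack_inner_add1 stack_inner_add2 ZB)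
    also have "stack_inner R (kron Bm D') = stack_inner D' (kron Bm R)" using sB[of D' R] by (simp add: stack_inner_commute)
    finally show ?thesis by simp
  qed
  have e3: "stack_inner D' (kron Wt D') = stack_inner D (kron Wt D) + 2 * stack_inner Dl (kron Wt D)
      + stack_inner Dl (kron Wt Dl)"
  proof -
    have "stack_inner D' (kron Wt D') = stack_inner D (kron Wt D) + stack_inner D (kron Wt Dl)
        + stack_inner Dl (kron Wt D) + stack_inner Dl (kron Wt Dl)"
      by (simp add: D' kron_add stack_inner_add1 stack_inner_add2)
    also have "stack_inner D (kron Wt Dl) = stack_inner Dl (kron Wt D)" using sW[of Dl D] by (simp add: stack_inner_commute)
    finally show ?thesis by simp
  qed
  have e4: "stack_inner D' (kron Wt Dl) = stack_inner Dl (kron Wt D) + stack_inner Dl (kron Wt Dl)"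
  proof -
    have "stack_inner D' (kron Wt Dl) = stack_inner D (kron Wt Dl) + stack_inner Dl (kron Wt Dl)"
      by (simp add: D' stack_inner_add1)
    also have "stack_inner D (kron Wt Dl) = stack_inner Dl (kron Wt D)" using sW[of Dl D] by (simp add: stack_inner_commute)
    finally show ?thesis by simp
  qed
  show ?thesis using ag e1 e2 e3 e4 by (simp add: algebra_simps)
qed

lemma lyapunov_descent:
  fixes D D' Dl R R' g e Z :: "'n::finite \<Rightarrow> 'a::euclidean_space"
    and Wt Bm Cm :: "'n \<Rightarrow> 'n \<Rightarrow> real"
  assumes symWt: "\<And>n m. Wt n m = Wt m n" and symB: "\<And>n m. Bm n m = Bm m n"
    and D': "D' = D + Dl"
    and R': "R' = R + D' + Z" and Z: "kron Bm Z = 0"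
    and rel: "kron Bm R' = - kron Wt Dl - kron Cm D' - (\<lambda>n. \<alpha> *\<^sub>R g n)"
    and psdC: "0 \<le> stack_inner D' (kron Cm D')" and psdB: "0 \<le> stack_inner D' (kron Bm D')"
    and gam: "\<gamma> * stack_inner Dl Dl \<le> stack_inner Dl (kron Wt Dl)"
    and mono: "\<mu> * stack_inner D D \<le> stack_inner D (g - e)"
    and eta: "\<eta> > 0" and alpha: "\<alpha> > 0"
  shows "stack_inner D' (kron Wt D') + stack_inner R' (kron Bm R') \<le> stack_inner D (kron Wt D)
      + stack_inner R (kron Bm R)
           - (\<gamma> - 2*\<alpha>*\<eta>) * stack_inner Dl Dl - 2*\<alpha>*\<mu> * stack_inner D D - 2*\<alpha> * stack_inner D e + \<alpha>/(2*\<eta>) * stack_inner g g"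
proof -
  have ident: "stack_inner D' (kron Wt D') + stack_inner R' (kron Bm R') = stack_inner D (kron Wt D)
      + stack_inner R (kron Bm R)
      - stack_inner Dl (kron Wt Dl) - 2 * stack_inner D' (kron Cm D') - stack_inner D' (kron Bm D') - 2 * \<alpha> * stack_inner D' g"
    by (rule lyapunov_identity[OF symWt symB D' R' Z rel])
  have split: "stack_inner D' g = stack_inner D (g - e) + stack_inner D e + stack_inner Dl g"
    by (simp add: D' stack_inner_add1 stack_inner_diff2)
  have yg: "- 2 * stack_inner Dl g \<le> 2*\<eta> * stack_inner Dl Dl + stack_inner g g / (2*\<eta>)"
  proof -
    have "2 * stack_inner (- Dl) g \<le> (2*\<eta>) * stack_inner (- Dl) (- Dl) + stack_inner g g / (2*\<eta>)"
      by (rule stack_inner_young) (use eta in simp)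
    then show ?thesis by (simp add: stack_inner_uminus1 stack_inner_uminus2)
  qed
  have "- 2 * \<alpha> * stack_inner D' g \<le> - 2*\<alpha>*\<mu> * stack_inner D D - 2*\<alpha> * stack_inner D e
      + \<alpha> * (2*\<eta> * stack_inner Dl Dl + stack_inner g g / (2*\<eta>))"
  proof -
    have "- 2 * \<alpha> * stack_inner D' g = - 2*\<alpha> * stack_inner D (g - e) - 2*\<alpha> * stack_inner D e
        + \<alpha> * (- 2 * stack_inner Dl g)"
      by (simp add: split algebra_simps)
    also have "\<dots> \<le> - 2*\<alpha>*\<mu> * stack_inner D D - 2*\<alpha> * stack_inner D e
        + \<alpha> * (2*\<eta> * stack_inner Dl Dl + stack_inner g g / (2*\<eta>))"
      using mono yg alpha by (intro add_mono mult_left_mono) (auto simp: mult.assoc)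
    finally show ?thesis .
  qed
  then show ?thesis using ident psdC psdB gam
    by (simp add: algebra_simps)
qed


definition frob_sq :: "('n::finite \<Rightarrow> 'n \<Rightarrow> real) \<Rightarrow> real" where
  "frob_sq A = (\<Sum>n\<in>UNIV. \<Sum>m\<in>UNIV. (A n m)^2)"

lemma frob_sq_nonneg: "0 \<le> frob_sq A" by (simp add: frob_sq_def sum_nonneg)

lemma kron_image_sq_bound:
  fixes D D' Dl R' g :: "'n::finite \<Rightarrow> 'a::euclidean_space"
    and Wt Bm Cm :: "'n \<Rightarrow> 'n \<Rightarrow> real"
  assumes D': "D' = D + Dl"
    and rel: "kron Bm R' = - kron Wt Dl - kron Cm D' - (\<lambda>n. \<alpha> *\<^sub>R g n)"
  shows "stack_inner (kron Bm R') (kron Bm R') \<le> 3 * (frob_sq Wt * stack_inner Dl Dl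
           + frob_sq Cm * (2 * (stack_inner D D + stack_inner Dl Dl)) + \<alpha>^2 * stack_inner g g)"
proof -
  have nw: "0 \<le> frob_sq Wt" "0 \<le> frob_sq Cm" by (rule frob_sq_nonneg)+
  have dd: "stack_inner D' D' \<le> 2 * (stack_inner D D + stack_inner Dl Dl)" unfolding D' by (rule stack_inner_sq2)
  have "stack_inner (kron Bm R') (kron Bm R') = stack_inner ((- kron Wt Dl) + (- kron Cm D') + (- (\<lambda>n. \<alpha> *\<^sub>R g n))) ((- kron Wt Dl) + (- kron Cm D') + (- (\<lambda>n. \<alpha> *\<^sub>R g n)))"
    by (simp add: rel)
  also have "\<dots> \<le> 3 * (stack_inner (kron Wt Dl) (kron Wt Dl) + stack_inner (kron Cm D') (kron Cm D') + stack_inner (\<lambda>n. \<alpha> *\<^sub>R g n) (\<lambda>n. \<alpha> *\<^sub>R g n))"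
    using stack_inner_sq3[of "- kron Wt Dl" "- kron Cm D'" "- (\<lambda>n. \<alpha> *\<^sub>R g n)"] by (simp only: stack_inner_neg_neg)
  also have "\<dots> \<le> 3 * (frob_sq Wt * stack_inner Dl Dl + frob_sq Cm * (2 * (stack_inner D D + stack_inner Dl Dl)) + \<alpha>^2 * stack_inner g g)"
  proof -
    have a: "stack_inner (kron Wt Dl) (kron Wt Dl) \<le> frob_sq Wt * stack_inner Dl Dl"
      using kron_frob_bound[of Wt Dl] by (simp add: frob_sq_def)
    have b: "stack_inner (kron Cm D') (kron Cm D') \<le> frob_sq Cm * (2 * (stack_inner D D + stack_inner Dl Dl))"
      using kron_frob_bound[of Cm D'] mult_left_mono[OF dd nw(2)] by (simp add: frob_sq_def)
    have c: "stack_inner (\<lambda>n. \<alpha> *\<^sub>R g n) (\<lambda>n. \<alpha> *\<^sub>R g n)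
        = \<alpha>^2 * stack_inner g g"
      by (simp add: stack_inner_scale1 stack_inner_scale2 power2_eq_square)
    show ?thesis using a b c by simp
  qed
  finally show ?thesis .
qed

lemma lyapunov_upper:
  fixes D D' Dl R' g :: "'n::finite \<Rightarrow> 'a::euclidean_space"
    and Wt Bm Cm :: "'n \<Rightarrow> 'n \<Rightarrow> real"
  assumes D': "D' = D + Dl"
    and rel: "kron Bm R' = - kron Wt Dl - kron Cm D' - (\<lambda>n. \<alpha> *\<^sub>R g n)"
    and sq: "stack_inner R' (kron Bm R') \<le> stack_inner (kron Bm R') (kron Bm R') / cB" and cB: "cB > 0"
  shows "stack_inner D' (kron Wt D') + stack_inner R' (kron Bm R') \<le>
     ((1 + frob_sq Wt) + (3 * frob_sq Wt + 6 * frob_sq Cm) / cB) * stack_inner Dl Dl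
     + ((1 + frob_sq Wt) + 6 * frob_sq Cm / cB) * stack_inner D D + (3 * \<alpha>^2 / cB) * stack_inner g g"
proof -
  have nw: "0 \<le> frob_sq Wt" "0 \<le> frob_sq Cm" by (rule frob_sq_nonneg)+
  have dd: "stack_inner D' D' \<le> 2 * (stack_inner D D + stack_inner Dl Dl)" unfolding D' by (rule stack_inner_sq2)
  have t1: "stack_inner D' (kron Wt D') \<le> (1 + frob_sq Wt) * (stack_inner D D + stack_inner Dl Dl)"
  proof -
    have "stack_inner D' (kron Wt D') \<le> (1 + frob_sq Wt) / 2 * stack_inner D' D'"
      using kron_quad_frob_bound[of D' Wt] by (simp add: frob_sq_def)
    also have "\<dots> \<le> (1 + frob_sq Wt) / 2 * (2 * (stack_inner D D + stack_inner Dl Dl))"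
      using dd nw by (intro mult_left_mono) auto
    also have "\<dots> = (1 + frob_sq Wt) * (stack_inner D D + stack_inner Dl Dl)" by simp
    finally show ?thesis .
  qed
  have kb: "stack_inner (kron Bm R') (kron Bm R') \<le> 3 * (frob_sq Wt * stack_inner Dl Dl
      + frob_sq Cm * (2 * (stack_inner D D + stack_inner Dl Dl)) + \<alpha>^2 * stack_inner g g)"
    by (rule kron_image_sq_bound[OF D' rel])
  have "stack_inner R' (kron Bm R') \<le> 3 * (frob_sq Wt * stack_inner Dl Dl + frob_sq Cm * (2 * (stack_inner D D + stack_inner Dl Dl)) + \<alpha>^2 * stack_inner g g) / cB"
    using sq kb cB by (meson divide_right_mono less_imp_le order_trans)
  with t1 have "stack_inner D' (kron Wt D') + stack_inner R' (kron Bm R')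
      \<le> (1 + frob_sq Wt) * (stack_inner D D + stack_inner Dl Dl) + 3 * (frob_sq Wt * stack_inner Dl Dl + frob_sq Cm * (2 * (stack_inner D D + stack_inner Dl Dl)) + \<alpha>^2 * stack_inner g g) / cB"
    by linarith
  also have "\<dots> = ((1 + frob_sq Wt) + (3 * frob_sq Wt + 6 * frob_sq Cm) / cB) * stack_inner Dl Dl
     + ((1 + frob_sq Wt) + 6 * frob_sq Cm / cB) * stack_inner D D + (3 * \<alpha>^2 / cB) * stack_inner g g"
    using cB by (simp add: field_simps)
  finally show ?thesis .
qed

section \<open>Averaging over one node's draw\<close>

lemma avg_ghat_centered:
  fixes gi :: "nat \<Rightarrow> 'a \<Rightarrow> 'a::real_inner" and yn :: "nat \<Rightarrow> 'a"
  assumes "qn \<ge> 1"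
  shows "(\<Sum>k<qn. gi k xn - gi k (yn k) + (1 / real qn) *\<^sub>R (\<Sum>i<qn. gi i (yn i))
            - (1 / real qn) *\<^sub>R (\<Sum>i<qn. gi i xn)) = 0"
proof -
  have c1: "(\<Sum>k<qn. (1 / real qn) *\<^sub>R (\<Sum>i<qn. gi i (yn i))) = (\<Sum>i<qn. gi i (yn i))"
    using assms by (simp add: sum_constant_scaleR)
  have c2: "(\<Sum>k<qn. (1 / real qn) *\<^sub>R (\<Sum>i<qn. gi i xn)) = (\<Sum>i<qn. gi i xn)"
    using assms by (simp add: sum_constant_scaleR)
  show ?thesis by (simp only: sum.distrib sum_subtractf c1 c2) simp
qed

lemma avg_table_err:
  fixes yn :: "nat \<Rightarrow> 'a::real_normed_vector"
  assumes "qn \<ge> 1"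
  shows "(1 / real qn) * (\<Sum>k<qn. (1 / real qn) * (\<Sum>i<qn. (norm ((if i = k then xn else yn i) - xs))^2))
     = (norm (xn - xs))^2 / real qn + (1 - 1 / real qn) * ((1 / real qn) * (\<Sum>i<qn. (norm (yn i - xs))^2))"
proof -
  have "(\<Sum>k<qn. \<Sum>i<qn. (norm ((if i = k then xn else yn i) - xs))^2)
      = (\<Sum>i<qn. \<Sum>k<qn. (norm ((if i = k then xn else yn i) - xs))^2)" by (rule sum.swap)
  also have "\<dots> = (\<Sum>i<qn. (norm (xn - xs))^2 + (real qn - 1) * (norm (yn i - xs))^2)"
  proof (rule sum.cong[OF refl])
    fix i assume i: "i \<in> {..<qn}"
    have "(\<Sum>k<qn. (norm ((if i = k then xn else yn i) - xs))^2)
        = (\<Sum>k<qn. (norm (yn i - xs))^2 + (if k = i then (norm (xn - xs))^2 - (norm (yn i - xs))^2 else 0))"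
      by (rule sum.cong) auto
    also have "\<dots> = real qn * (norm (yn i - xs))^2 + ((norm (xn - xs))^2 - (norm (yn i - xs))^2)"
      using i by (simp add: sum.distrib)
    also have "\<dots> = (norm (xn - xs))^2 + (real qn - 1) * (norm (yn i - xs))^2"
      by (simp add: algebra_simps)
    finally show "(\<Sum>k<qn. (norm ((if i = k then xn else yn i) - xs))^2) = (norm (xn - xs))^2
        + (real qn - 1) * (norm (yn i - xs))^2" .
  qed
  also have "\<dots> = real qn * (norm (xn - xs))^2 + (real qn - 1) * (\<Sum>i<qn. (norm (yn i - xs))^2)"
    by (simp add: sum.distrib sum_distrib_left)
  finally have e: "(\<Sum>k<qn. \<Sum>i<qn. (norm ((if i = k then xn else yn i) - xs))^2)
      = real qn * (norm (xn - xs))^2 + (real qn - 1) * (\<Sum>i<qn. (norm (yn i - xs))^2)" .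
  have "(1 / real qn) * (\<Sum>k<qn. (1 / real qn) * (\<Sum>i<qn. (norm ((if i = k then xn else yn i) - xs))^2))
      = (1 / real qn) * (1 / real qn) * (\<Sum>k<qn. \<Sum>i<qn. (norm ((if i = k then xn else yn i) - xs))^2)"
    by (simp add: sum_distrib_left)
  also have "\<dots> = (1 / real qn) * (1 / real qn) * (real qn * (norm (xn - xs))^2 + (real qn - 1) * (\<Sum>i<qn. (norm (yn i - xs))^2))"
    by (simp add: e)
  also have "\<dots> = (norm (xn - xs))^2 / real qn + (1 - 1 / real qn) * ((1 / real qn) * (\<Sum>i<qn. (norm (yn i - xs))^2))"
    using assms by (simp add: field_simps)
  finally show ?thesis .
qed

lemma variance_le_second_moment:
  fixes b :: "nat \<Rightarrow> 'a::real_inner"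
  assumes "qn \<ge> 1"
  shows "(\<Sum>k<qn. (norm (b k - (1 / real qn) *\<^sub>R (\<Sum>i<qn. b i)))^2) \<le> (\<Sum>k<qn. (norm (b k))^2)"
proof -
  define m where "m = (1 / real qn) *\<^sub>R (\<Sum>i<qn. b i)"
  have sm: "(\<Sum>i<qn. b i) = real qn *\<^sub>R m" using assms by (simp add: m_def)
  have "(\<Sum>k<qn. (norm (b k - m))^2) = (\<Sum>k<qn. (norm (b k))^2 - 2 * (b k \<bullet> m) + m \<bullet> m)"
    by (rule sum.cong) (simp_all add: power2_norm_eq_inner inner_diff_left inner_diff_right inner_commute)
  also have "\<dots> = (\<Sum>k<qn. (norm (b k))^2) - 2 * ((\<Sum>k<qn. b k) \<bullet> m) + real qn * (m \<bullet> m)"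
    by (simp add: sum.distrib sum_subtractf sum_distrib_left inner_sum_left)
  also have "\<dots> = (\<Sum>k<qn. (norm (b k))^2) - real qn * (m \<bullet> m)" by (simp add: sm)
  also have "\<dots> \<le> (\<Sum>k<qn. (norm (b k))^2)" by simp
  finally show ?thesis by (simp add: m_def)
qed

lemma norm_diff_sq_le: "(norm (a - b :: 'a::real_inner))^2 \<le> 2 * (norm a)^2 + 2 * (norm b)^2"
proof -
  have "2 * (a \<bullet> b) \<le> 1 * (a \<bullet> a) + (b \<bullet> b) / 1" by (rule young_inner) simp
  moreover have "0 \<le> (a + b) \<bullet> (a + b)" by simp
  ultimately show ?thesis
    by (simp add: power2_norm_eq_inner inner_diff_left inner_diff_right inner_add_left inner_add_right inner_commute)
qed

lemma avg_ghat_sq_bound: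
  fixes gi :: "nat \<Rightarrow> 'a \<Rightarrow> 'a::real_inner" and yn :: "nat \<Rightarrow> 'a"
  assumes q1: "qn \<ge> 1" and lip: "\<And>i u v. i < qn \<Longrightarrow> norm (gi i u - gi i v) \<le> L * norm (u - v)"
    and L: "L \<ge> 0"
  shows "(1 / real qn) * (\<Sum>k<qn. (norm (gi k xn - gi k (yn k) + (1 / real qn) *\<^sub>R (\<Sum>i<qn. gi i (yn i))
            - (1 / real qn) *\<^sub>R (\<Sum>i<qn. gi i xs)))^2)
       \<le> 2 * L^2 * (norm (xn - xs))^2 + 2 * L^2 * ((1 / real qn) * (\<Sum>i<qn. (norm (yn i - xs))^2))"
proof -
  have sq: "(norm (gi i u - gi i v))^2 \<le> L^2 * (norm (u - v))^2" if "i < qn" for i u v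
    using power_mono[OF lip[OF that, of u v] norm_ge_zero] by (simp add: power_mult_distrib)
  define a where "a k = gi k xn - gi k xs" for k
  define b where "b k = gi k (yn k) - gi k xs" for k
  define bb where "bb = (1 / real qn) *\<^sub>R (\<Sum>i<qn. b i)"
  have bb: "bb = (1 / real qn) *\<^sub>R (\<Sum>i<qn. gi i (yn i)) - (1 / real qn) *\<^sub>R (\<Sum>i<qn. gi i xs)"
    by (simp add: bb_def b_def sum_subtractf scaleR_diff_right)
  have eq: "gi k xn - gi k (yn k) + (1 / real qn) *\<^sub>R (\<Sum>i<qn. gi i (yn i))
      - (1 / real qn) *\<^sub>R (\<Sum>i<qn. gi i xs)
        = a k - (b k - bb)" for k
    by (simp add: a_def b_def bb algebra_simps)
  have "(\<Sum>k<qn. (norm (a k - (b k - bb)))^2) \<le> (\<Sum>k<qn. 2 * (norm (a k))^2 + 2 * (norm (b k - bb))^2)"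
    by (rule sum_mono) (rule norm_diff_sq_le)
  also have "\<dots> = 2 * (\<Sum>k<qn. (norm (a k))^2) + 2 * (\<Sum>k<qn. (norm (b k - bb))^2)"
    by (simp add: sum.distrib sum_distrib_left)
  also have "\<dots> \<le> 2 * (\<Sum>k<qn. L^2 * (norm (xn - xs))^2) + 2 * (\<Sum>k<qn. L^2 * (norm (yn k - xs))^2)"
  proof -
    have "(\<Sum>k<qn. (norm (a k))^2) \<le> (\<Sum>k<qn. L^2 * (norm (xn - xs))^2)"
      unfolding a_def by (rule sum_mono) (simp add: lip sq)
    moreover have "(\<Sum>k<qn. (norm (b k - bb))^2) \<le> (\<Sum>k<qn. (norm (b k))^2)"
      unfolding bb_def by (rule variance_le_second_moment[OF q1])
    moreover have "(\<Sum>k<qn. (norm (b k))^2) \<le> (\<Sum>k<qn. L^2 * (norm (yn k - xs))^2)"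
      unfolding b_def by (rule sum_mono) (simp add: lip sq)
    ultimately show ?thesis by linarith
  qed
  finally have "(\<Sum>k<qn. (norm (a k - (b k - bb)))^2) \<le> 2 * real qn * L^2 * (norm (xn - xs))^2
      + 2 * L^2 * (\<Sum>k<qn. (norm (yn k - xs))^2)"
    by (simp add: sum_distrib_left mult_ac)
  then have "(1 / real qn) * (\<Sum>k<qn. (norm (a k - (b k - bb)))^2)
      \<le> (1 / real qn) * (2 * real qn * L^2 * (norm (xn - xs))^2 + 2 * L^2 * (\<Sum>k<qn. (norm (yn k - xs))^2))"
    by (rule mult_left_mono) simp
  also have "\<dots> = 2 * L^2 * (norm (xn - xs))^2 + 2 * L^2 * ((1 / real qn) * (\<Sum>i<qn. (norm (yn i - xs))^2))"
    using q1 by (simp add: field_simps)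
  finally show ?thesis by (simp add: eq)
qed

section \<open>The Lyapunov function\<close>

context dsa_setting begin

abbreviation qmax where "qmax \<equiv> real (Max (range q))"
abbreviation qmin where "qmin \<equiv> real (Min (range q))"

lemma qmax_ge: "real (q n) \<le> qmax" by simp
lemma qmin_le: "qmin \<le> real (q n)"
  by (simp add: Min_le)
lemma qmin_ge1: "qmin \<ge> 1"
proof -
  have "Min (range q) \<in> range q" by (rule Min_in) auto
  then obtain n where "Min (range q) = q n" by blast
  then show ?thesis using q_pos[of n] by simp
qed
lemma qmin_pos: "qmin > 0" using qmin_ge1 by linarith
lemma qmax_ge_qmin: "qmin \<le> qmax" using qmin_le qmax_ge order_trans by blast

lemma lip_norm: "i < q n \<Longrightarrow> norm (grad n i u - grad n i v) \<le> L * norm (u - v)"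
  using lipschitz_onD[OF f_lip[of i n], of u v] by (simp add: dist_norm)

lemma L_nonneg: "L \<ge> 0"
proof -
  obtain n :: 'n where True by simp
  show ?thesis using lipschitz_on_nonneg[OF f_lip[of 0 n]] q_pos[of n] by simp
qed

lemma grad_mono: "i < q n \<Longrightarrow> \<mu> * (norm (x - y))^2 \<le> (grad n i x - grad n i y) \<bullet> (x - y)"
  by (rule strongly_convex_gradient_monotone[OF f_sc f_grad])

lemma mu_le_L: "\<mu> \<le> L"
proof -
  obtain n :: 'n where True by simp
  have i: "0 < q n" using q_pos[of n] by simp
  obtain b :: 'a where b: "b \<in> Basis" using nonempty_Basis by blast
  have nb: "norm b = 1" using b by simp
  have "\<mu> * (norm (b - 0))^2 \<le> (grad n 0 b - grad n 0 0) \<bullet> (b - 0)" by (rule grad_mono[OF i])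
  also have "\<dots> \<le> norm (grad n 0 b - grad n 0 0) * norm (b - 0)" by (rule norm_cauchy_schwarz)
  also have "\<dots> \<le> L * norm (b - 0) * norm (b - 0)"
    using lip_norm[OF i, of b 0] by (simp add: mult_right_mono)
  finally show ?thesis using nb by simp
qed

lemma eta_bound: "\<eta> > L^2 * (qmax + qmin) / (2 * \<mu> * qmin)"
proof -
  have q1: "qmin \<ge> 1" by (rule qmin_ge1)
  have T: "L^2 * (qmax + qmin) / (2 * \<mu> * qmin) \<le> L\<^sup>2 * qmax / (\<mu> * qmin) + L\<^sup>2 / \<mu> - L"
  proof -
    have q0: "qmin > 0" using q1 by linarith
    have "L^2 * (qmax + qmin) / (2 * \<mu> * qmin) = L^2 * qmax / (2 * \<mu> * qmin) + L^2 * qmin / (2 * \<mu> * qmin)"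
      by (simp add: add_divide_distrib distrib_left)
    also have "L^2 * qmin / (2 * \<mu> * qmin) = L^2 / (2 * \<mu>)" using q0 by simp
    finally have "L^2 * (qmax + qmin) / (2 * \<mu> * qmin) = L^2 * qmax / (2 * \<mu> * qmin) + L^2 / (2 * \<mu>)" .
    moreover have "L^2 * qmax / (2 * \<mu> * qmin) \<le> L\<^sup>2 * qmax / (\<mu> * qmin) - L^2 * qmax / (2 * \<mu> * qmin)"
      by (simp add: field_simps)
    moreover have "L^2 * qmax / (2 * \<mu> * qmin) \<ge> L^2 / (2 * \<mu>)"
    proof -
      have general: "\<And>a b::real. 1 \<le> b \<Longrightarrow> b \<le> a \<Longrightarrow> 1 \<le> a / b" by simp
      have "qmax / qmin \<ge> 1" by (rule general[OF q1 qmax_ge_qmin])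
      then have "L^2 / (2 * \<mu>) * 1 \<le> L^2 / (2 * \<mu>) * (qmax / qmin)" using \<mu>_pos
        by (intro mult_left_mono) auto
      then show ?thesis by (simp add: field_simps)
    qed
    moreover have "L^2 / \<mu> \<ge> L"
    proof -
      have "L * \<mu> \<le> L * L" using mu_le_L L_nonneg by (simp add: mult_left_mono)
      then show ?thesis using \<mu>_pos by (simp add: field_simps power2_eq_square)
    qed
    ultimately show ?thesis by (simp add: field_simps)
  qed
  then show ?thesis using \<eta>_gt by linarith
qed

lemma eta_pos: "\<eta> > 0"
proof -
  have "0 \<le> L^2 * (qmax + qmin) / (2 * \<mu> * qmin)" using qmin_ge1 qmax_ge_qmin \<mu>_pos by simp
  then show ?thesis using eta_bound by linarith
qed

lemma gamma_gt_step: "min_eig_kron Wt TYPE('a) > 2 * \<alpha> * \<eta>"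
  using \<alpha>_lt eta_pos by (simp add: field_simps)

lemma gamma_quad_Wt: "min_eig_kron Wt TYPE('a) * stack_inner Z Z \<le> stack_inner Z (kron Wt (Z::'n \<Rightarrow> 'a))"
  by (rule min_eig_kron_quad_lower[of Wt, OF Wt_sym])

lemma Bm_sym: "Bm n m = Bm m n" by (simp add: Bm_def W_sym Wt_sym)

lemma kron_Cm: "kron Cm Z = (\<lambda>n. Z n + kron W Z n - 2 *\<^sub>R kron Wt Z n)"
proof -
  have "Cm = (\<lambda>n m. (\<lambda>n m. (if n = m then 1 else 0) + W n m) n m - 2 * Wt n m)" by (simp add: Cm_def[abs_def])
  then have "kron Cm Z = kron (\<lambda>n m. (if n = m then 1 else 0) + W n m) Z - kron (\<lambda>n m. 2 * Wt n m) Z"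
    by (simp add: kron_mdiff)
  also have "\<dots> = (\<lambda>n. Z n + kron W Z n - 2 *\<^sub>R kron Wt Z n)"
    by (simp add: kron_madd kron_id kron_mscale fun_eq_iff)
  finally show ?thesis .
qed

lemma quad_lin: "quad (\<lambda>n m. a * A n m + b * B n m) v = a * quad A v + b * quad B v"
  by (simp add: quad_def sum.distrib sum_distrib_left algebra_simps)

lemma Bm_psd: "0 \<le> stack_inner v (kron Bm (v::'n \<Rightarrow> real))"
proof -
  have "quad Bm v = quad Wt v - quad W v"
    using quad_lin[of 1 Wt "-1" W v] by (simp add: Bm_def[abs_def])
  then show ?thesis using W_le_Wt[of v] by (simp add: quad_ip)
qed

lemma Cm_psd: "0 \<le> stack_inner v (kron Cm (v::'n \<Rightarrow> real))"
proof -
  define I :: "'n \<Rightarrow> 'n \<Rightarrow> real" where "I n m = (if n = m then 1 else 0)" for n m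
  have e1: "quad Cm v = quad I v + quad W v - 2 * quad Wt v"
  proof -
    have "quad Cm v = quad (\<lambda>n m. 1 * (\<lambda>n m. I n m + W n m) n m + (-2) * Wt n m) v"
      by (simp add: Cm_def[abs_def] I_def)
    also have "\<dots> = quad (\<lambda>n m. I n m + W n m) v - 2 * quad Wt v"
      using quad_lin[of 1 "\<lambda>n m. I n m + W n m" "-2" Wt v] by simp
    also have "quad (\<lambda>n m. I n m + W n m) v = quad I v + quad W v"
      using quad_lin[of 1 I 1 W v] by simp
    finally show ?thesis .
  qed
  have e2: "quad (\<lambda>n m. ((if n = m then 1 else 0) + W n m) / 2) v = (quad I v + quad W v) / 2"
    using quad_lin[of "1/2" I "1/2" W v] by (simp add: I_def add_divide_distrib)
  show ?thesis using Wt_le[of v] e1 e2 by (simp add: quad_ip)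
qed

lemma Bm_ker: "kron Bm v = 0 \<longleftrightarrow> (\<exists>c. \<forall>n. (v::'n \<Rightarrow> real) n = c)"
  using null_WtW[of v] by (simp add: Bm_def kron_apply_def fun_eq_iff)

sublocale B: consensus_psd Bm
  by unfold_locales (auto simp: Bm_sym Bm_psd Bm_ker)

lemma rowsum_Wt: "(\<Sum>m\<in>UNIV. Wt n m) = 1"
  using null_Wt[of "\<lambda>n. 1"] by simp
lemma rowsum_W: "(\<Sum>m\<in>UNIV. W n m) = 1"
  using null_W[of "\<lambda>n. 1"] by auto

lemma kron_Wt_const: "kron Wt (\<lambda>n. c) = (\<lambda>n. c)"
  by (simp add: kron_apply_def scaleR_sum_left[symmetric] rowsum_Wt)
lemma kron_W_const: "kron W (\<lambda>n. c) = (\<lambda>n. c)"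
  by (simp add: kron_apply_def scaleR_sum_left[symmetric] rowsum_W)
lemma kron_Bm_const: "kron Bm (\<lambda>n. c) = 0"
  by (simp add: kron_Bm kron_Wt_const kron_W_const)
lemma kron_Cm_const: "kron Cm (\<lambda>n. c) = 0"
  by (simp add: kron_Cm kron_Wt_const kron_W_const fun_eq_iff scaleR_2)


definition grad_star :: "'n \<Rightarrow> 'a" where "grad_star n = (1 / real (q n)) *\<^sub>R (\<Sum>i<q n. grad n i xstar)"

lemma sum_grad_star: "(\<Sum>n\<in>UNIV. grad_star n) = 0"
proof -
  define F where "F z = (\<Sum>n\<in>UNIV. (1 / real (q n)) * (\<Sum>i<q n. f n i z))" for z
  have "(F has_derivative (\<lambda>h. \<Sum>n\<in>UNIV. (1 / real (q n)) * (\<Sum>i<q n. grad n i xstar \<bullet> h))) (at xstar)"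
    unfolding F_def
    by (intro has_derivative_sum has_derivative_mult_right f_grad) simp
  moreover have "(\<lambda>h. \<Sum>n\<in>UNIV. (1 / real (q n)) * (\<Sum>i<q n. grad n i xstar \<bullet> h))
      = (\<lambda>h. (\<Sum>n\<in>UNIV. grad_star n) \<bullet> h)"
    by (simp add: grad_star_def fun_eq_iff inner_sum_left)
  ultimately have d: "(F has_derivative (\<lambda>h. (\<Sum>n\<in>UNIV. grad_star n) \<bullet> h)) (at xstar)" by simp
  have "F xstar \<le> F z" for z using xstar_min[of z] by (simp add: F_def)
  then show ?thesis by (rule gradient_zero_at_minimum[OF d])
qed

text \<open>The gradients at the optimum sum to zero, so \<open>Bm S = -\<alpha> g\<^sup>*\<close> is solvable.\<close>
definition S_star :: "'n \<Rightarrow> 'a" where "S_star = (SOME S. kron Bm S = (\<lambda>n. - \<alpha> *\<^sub>R grad_star n))"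

lemma kron_Bm_S_star: "kron Bm S_star = (\<lambda>n. - \<alpha> *\<^sub>R grad_star n)"
proof -
  have "(\<Sum>n\<in>UNIV. - \<alpha> *\<^sub>R grad_star n) = 0"
    by (simp add: sum_negf scaleR_sum_right[symmetric] sum_grad_star)
  then have "\<exists>S. kron Bm S = (\<lambda>n. - \<alpha> *\<^sub>R grad_star n)" by (rule B.solvable_zero_sum)
  then show ?thesis unfolding S_star_def by (rule someI_ex)
qed

definition cB :: real where
  "cB = (SOME c. c > 0 \<and>
     (\<forall>v::'n \<Rightarrow> real. (\<Sum>n\<in>UNIV. v n) = 0 \<longrightarrow> c * stack_inner v v \<le> stack_inner v (kron Bm v)))"

lemma cB_coercive:
  "cB > 0"
  "\<And>v::'n \<Rightarrow> real. (\<Sum>n\<in>UNIV. v n) = 0 \<Longrightarrow> cB * stack_inner v v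
      \<le> stack_inner v (kron Bm v)"
  using someI_ex[OF B.coercive_on_zero_sum] unfolding cB_def[symmetric] by auto

definition "\<kappa>1 = (1 + frob_sq Wt) + (3 * frob_sq Wt + 6 * frob_sq Cm) / cB"
definition "\<kappa>2 = (1 + frob_sq Wt) + 6 * frob_sq Cm / cB"
definition "\<kappa>3 = 3 * \<alpha>^2 / cB"

definition lyap_params :: "real \<Rightarrow> real \<Rightarrow> bool" where
  "lyap_params \<delta> cp \<longleftrightarrow> \<delta> > 0 \<and> cp \<ge> 0 \<and> \<delta> * \<kappa>1
      \<le> min_eig_kron Wt TYPE('a) - 2 * \<alpha> * \<eta>
     \<and> 2 * (\<alpha>/(2*\<eta>) + \<delta> * \<kappa>3) * L^2 + \<delta> * cp - cp / qmax \<le> 0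
     \<and> 2 * (\<alpha>/(2*\<eta>) + \<delta> * \<kappa>3) * L^2 + (1 + \<delta>) * cp / qmin - 2 * \<alpha> * \<mu> + \<delta> * \<kappa>2 \<le> 0"

definition xerr where "xerr d t = X d t - (\<lambda>n. xstar)"
definition serr where "serr d t = S d t - S_star"
definition xstep where "xstep d t = X d (Suc t) - X d t"

definition full_grad where
  "full_grad d t n = (1 / real (q n)) *\<^sub>R (\<Sum>i<q n. grad n i (X d t n))"
definition ghat_at where
  "ghat_at d t n k = grad n k (X d t n) - grad n k (Yt d t n k)
     + (1 / real (q n)) *\<^sub>R (\<Sum>i<q n. grad n i (Yt d t n i))"
definition gerr where "gerr d t = (\<lambda>n. gh d t n - grad_star n)"
definition gnoise where "gnoise d t = (\<lambda>n. gh d t n - full_grad d t n)"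

definition table_err where
  "table_err d t n = (1 / real (q n)) * (\<Sum>i<q n. (norm (Yt d t n i - xstar))^2)"
definition table_err_upd where
  "table_err_upd d t n k =
     (1 / real (q n)) * (\<Sum>i<q n. (norm ((if i = k then X d t n else Yt d t n i) - xstar))^2)"

definition lyap_core where
  "lyap_core d t = stack_inner (xerr d t) (kron Wt (xerr d t)) + stack_inner (serr d t) (kron Bm (serr d t))"
definition lyap where "lyap cp d t = lyap_core d t + cp * (\<Sum>n\<in>UNIV. table_err d t n)"

text \<open>The draw-dependent part of the one-step bound for node \<open>n\<close> when it draws \<open>k\<close>.\<close>
definition drift where
  "drift \<delta> cp d t n k =
     - 2 * \<alpha> * (xerr d t n \<bullet> (ghat_at d t n k - full_grad d t n))
     + (\<alpha> / (2 * \<eta>) + \<delta> * \<kappa>3) * (norm (ghat_at d t n k - grad_star n))^2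
     + (1 + \<delta>) * cp * table_err_upd d t n k - cp * table_err d t n
     - (2 * \<alpha> * \<mu> - \<delta> * \<kappa>2) * (norm (xerr d t n))^2"

lemma table_err_nonneg: "0 \<le> table_err d t n"
  by (simp add: table_err_def sum_nonneg)

lemma gh_ghat_at: "gh d t n = ghat_at d t n (d t n)"
  by (simp add: gh_def ghat_at_def dsa_ghat_def)

lemma table_err_Suc: "table_err d (Suc t) n = table_err_upd d t n (d t n)"
  by (simp add: table_err_def table_err_upd_def Yt_Suc)

lemma kron_Bm_serr_Suc:
  "kron Bm (serr d (Suc t)) = - kron Wt (xstep d t) - kron Cm (xerr d (Suc t)) - (\<lambda>n. \<alpha> *\<^sub>R gerr d t n)"
proof -
  have xr: "X d (Suc t) = kron Wt (X d t) - (\<lambda>n. \<alpha> *\<^sub>R gh d t n) - kron Bm (S d t)" by (rule X_Suc)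
  have SS: "S d (Suc t) = S d t + X d (Suc t)" by (simp add: S_def fun_eq_iff)
  have KC: "kron Cm (xerr d (Suc t)) = kron Cm (X d (Suc t))"
    by (simp add: xerr_def kron_diff kron_Cm_const)
  show ?thesis
  proof
    fix n
    have a: "kron Bm (serr d (Suc t)) n = kron Bm (S d t) n + kron Wt (X d (Suc t)) n - kron W (X d (Suc t)) n
        + \<alpha> *\<^sub>R grad_star n"
      by (simp add: serr_def SS kron_diff kron_add kron_Bm_S_star kron_Bm[of "X d (Suc t)"])
    have b: "kron Bm (S d t) n = kron Wt (X d t) n - \<alpha> *\<^sub>R gh d t n - X d (Suc t) n"
      using fun_cong[OF xr, of n] by (simp add: algebra_simps)
    have c: "(- kron Wt (xstep d t) - kron Cm (xerr d (Suc t)) - (\<lambda>n. \<alpha> *\<^sub>R gerr d t n)) n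
        = - kron Wt (X d (Suc t)) n + kron Wt (X d t) n
          - (X d (Suc t) n + kron W (X d (Suc t)) n - 2 *\<^sub>R kron Wt (X d (Suc t)) n)
          - \<alpha> *\<^sub>R (gh d t n - grad_star n)"
      by (simp only: KC) (simp add: kron_Cm kron_diff xstep_def gerr_def)
    show "kron Bm (serr d (Suc t)) n = (- kron Wt (xstep d t) - kron Cm (xerr d (Suc t)) - (\<lambda>n. \<alpha> *\<^sub>R gerr d t n)) n"
      unfolding a b c by (simp add: algebra_simps scaleR_2)
  qed
qed


lemma kappa_nonneg: "\<kappa>1 \<ge> 0" "\<kappa>2 \<ge> 0" "\<kappa>3 \<ge> 0"
  using cB_coercive(1) frob_sq_nonneg[of Wt] frob_sq_nonneg[of Cm] by (auto simp: \<kappa>1_def \<kappa>2_def \<kappa>3_def)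

lemma full_grad_monotone:
  "\<mu> * stack_inner (xerr d t) (xerr d t) \<le> stack_inner (xerr d t) (gerr d t - gnoise d t)"
proof -
  have "\<mu> * (norm (xerr d t n))^2 \<le> xerr d t n \<bullet> (gerr d t n - gnoise d t n)" for n
  proof -
    have ge: "gerr d t n - gnoise d t n = (1 / real (q n)) *\<^sub>R (\<Sum>i<q n. grad n i (X d t n) - grad n i xstar)"
      by (simp add: gerr_def gnoise_def full_grad_def grad_star_def sum_subtractf scaleR_diff_right)
    have "(\<Sum>i<q n. \<mu> * (norm (X d t n - xstar))^2)
        \<le> (\<Sum>i<q n. (grad n i (X d t n) - grad n i xstar) \<bullet> (X d t n - xstar))"
      by (rule sum_mono) (rule grad_mono, simp)
    then have "real (q n) * (\<mu> * (norm (X d t n - xstar))^2)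
        \<le> (\<Sum>i<q n. grad n i (X d t n) - grad n i xstar) \<bullet> (X d t n - xstar)"
      by (simp add: inner_sum_left)
    then have "\<mu> * (norm (X d t n - xstar))^2
        \<le> (1 / real (q n)) * ((\<Sum>i<q n. grad n i (X d t n) - grad n i xstar) \<bullet> (X d t n - xstar))"
      using q_pos[of n] by (simp add: field_simps)
    then show ?thesis by (simp add: ge xerr_def inner_commute)
  qed
  then have "(\<Sum>n\<in>UNIV. \<mu> * (norm (xerr d t n))^2)
      \<le> (\<Sum>n\<in>UNIV. xerr d t n \<bullet> (gerr d t n - gnoise d t n))"
    by (rule sum_mono)
  then show ?thesis by (simp add: stack_inner_def power2_norm_eq_inner sum_distrib_left)
qed

lemma xerr_Suc: "xerr d (Suc t) = xerr d t + xstep d t"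
  by (simp add: xerr_def xstep_def)

lemma serr_Suc: "serr d (Suc t) = serr d t + xerr d (Suc t) + (\<lambda>n. xstar)"
  by (simp add: serr_def xerr_def S_def fun_eq_iff)

lemma lyap_core_descent:
  "lyap_core d (Suc t) \<le> lyap_core d t - (min_eig_kron Wt TYPE('a) - 2*\<alpha>*\<eta>) * stack_inner (xstep d t) (xstep d t)
     - 2*\<alpha>*\<mu> * stack_inner (xerr d t) (xerr d t) - 2*\<alpha> * stack_inner (xerr d t) (gnoise d t)
     + \<alpha>/(2*\<eta>) * stack_inner (gerr d t) (gerr d t)"
  unfolding lyap_core_def
proof (rule lyapunov_descent[OF Wt_sym Bm_sym xerr_Suc serr_Suc kron_Bm_const kron_Bm_serr_Suc
      _ B.psd_stack gamma_quad_Wt full_grad_monotone eta_pos \<alpha>_pos])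
  show "0 \<le> stack_inner (xerr d (Suc t)) (kron Cm (xerr d (Suc t)))"
    using kron_quad_lower_lift[of 0 Cm] Cm_psd by simp
qed

lemma lyap_core_upper:
  "lyap_core d (Suc t) \<le> \<kappa>1 * stack_inner (xstep d t) (xstep d t) + \<kappa>2 * stack_inner (xerr d t) (xerr d t)
     + \<kappa>3 * stack_inner (gerr d t) (gerr d t)"
  unfolding lyap_core_def \<kappa>1_def \<kappa>2_def \<kappa>3_def
  by (rule lyapunov_upper[OF xerr_Suc kron_Bm_serr_Suc B.quad_le_image_sq[OF cB_coercive] cB_coercive(1)])

lemma sum_drift:
  "(\<Sum>n\<in>UNIV. drift \<delta> cp d t n (d t n)) =
     - 2*\<alpha> * stack_inner (xerr d t) (gnoise d t) + (\<alpha>/(2*\<eta>) + \<delta> * \<kappa>3) * stack_inner (gerr d t) (gerr d t)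
     + (1 + \<delta>) * cp * (\<Sum>n\<in>UNIV. table_err d (Suc t) n) - cp * (\<Sum>n\<in>UNIV. table_err d t n)
     - (2*\<alpha>*\<mu> - \<delta> * \<kappa>2) * stack_inner (xerr d t) (xerr d t)"
  by (simp add: drift_def stack_inner_def power2_norm_eq_inner sum.distrib sum_subtractf sum_distrib_left
      sum_negf gnoise_def gerr_def gh_ghat_at table_err_Suc)

text \<open>The descent inequality pays for a fraction \<open>\<delta>\<close> of the upper bound, which yields the
  contraction factor \<open>1 + \<delta>\<close>; the remaining terms are collected in the drift, whose
  average over the draw is nonpositive.\<close>
lemma lyap_drift_step:
  assumes "lyap_params \<delta> cp"
  shows "(1 + \<delta>) * lyap cp d (Suc t) \<le> lyap cp d t + (\<Sum>n\<in>UNIV. drift \<delta> cp d t n (d t n))"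
proof -
  have \<delta>: "\<delta> \<ge> 0" "\<delta> * \<kappa>1 \<le> min_eig_kron Wt TYPE('a) - 2 * \<alpha> * \<eta>"
    using assms by (auto simp: lyap_params_def)
  have "0 \<le> (min_eig_kron Wt TYPE('a) - 2*\<alpha>*\<eta> - \<delta> * \<kappa>1) * stack_inner (xstep d t) (xstep d t)"
    using \<delta>(2) stack_inner_nonneg[of "xstep d t"] by simp
  then have "(1 + \<delta>) * lyap_core d (Suc t) \<le> lyap_core d t
      - (2*\<alpha>*\<mu> - \<delta> * \<kappa>2) * stack_inner (xerr d t) (xerr d t) - 2*\<alpha> * stack_inner (xerr d t) (gnoise d t)
      + (\<alpha>/(2*\<eta>) + \<delta> * \<kappa>3) * stack_inner (gerr d t) (gerr d t)"
    using lyap_core_descent[of d t] mult_left_mono[OF lyap_core_upper \<delta>(1), of d t]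
    by (simp add: algebra_simps)
  then show ?thesis by (simp add: lyap_def sum_drift algebra_simps)
qed

lemma avg_drift_le:
  assumes \<delta>: "\<delta> \<ge> 0" and cp: "cp \<ge> 0"
  defines "A \<equiv> \<alpha>/(2*\<eta>) + \<delta> * \<kappa>3"
  shows "(1 / real (q n)) * (\<Sum>k<q n. drift \<delta> cp d t n k)
    \<le> (norm (xerr d t n))^2 * (2 * A * L^2 + (1 + \<delta>) * cp / real (q n) - 2 * \<alpha> * \<mu> + \<delta> * \<kappa>2)
      + table_err d t n * (2 * A * L^2 + \<delta> * cp - (1 + \<delta>) * cp / real (q n))"
proof -
  have A0: "A \<ge> 0" using eta_pos \<alpha>_pos \<delta> kappa_nonneg by (simp add: A_def)
  define qn where "qn = real (q n)"
  have q1: "q n \<ge> 1" by (rule q_pos)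
  have qn1: "qn \<ge> 1" using q1 by (simp add: qn_def)
  define d2 where "d2 = (norm (xerr d t n))^2"
  define p where "p = table_err d t n"
  have Dn: "xerr d t n = X d t n - xstar" by (simp add: xerr_def)
  have e: "(\<Sum>k<q n. ghat_at d t n k - full_grad d t n) = 0"
    using avg_ghat_centered[where qn="q n" and gi="grad n" and xn="X d t n" and yn="Yt d t n", OF q1]
    by (simp add: ghat_at_def full_grad_def)
  have ge: "(1 / qn) * (\<Sum>k<q n. (norm (ghat_at d t n k - grad_star n))^2) \<le> 2 * L^2 * d2 + 2 * L^2 * p"
    using avg_ghat_sq_bound[where qn="q n" and gi="grad n" and xn="X d t n" and yn="Yt d t n" and xs=xstar
        and L=L, OF q1 lip_norm L_nonneg]
    by (simp add: ghat_at_def grad_star_def qn_def d2_def p_def table_err_def Dn algebra_simps)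
  have pe: "(1 / qn) * (\<Sum>k<q n. table_err_upd d t n k) = d2 / qn + (1 - 1 / qn) * p"
    using avg_table_err[where qn="q n" and xn="X d t n" and yn="Yt d t n" and xs=xstar, OF q1]
    by (simp add: table_err_upd_def qn_def d2_def p_def table_err_def Dn)
  have s1: "(\<Sum>k<q n. drift \<delta> cp d t n k)
      = (\<Sum>k<q n. - 2 * \<alpha> * (xerr d t n \<bullet> (ghat_at d t n k - full_grad d t n)))
        + A * (\<Sum>k<q n. (norm (ghat_at d t n k - grad_star n))^2)
        + (1 + \<delta>) * cp * (\<Sum>k<q n. table_err_upd d t n k) - qn * (cp * p + (2 * \<alpha> * \<mu> - \<delta> * \<kappa>2) * d2)"
    by (simp add: drift_def sum.distrib sum_subtractf sum_distrib_left A_def p_def d2_def qn_def algebra_simps)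
  have s2: "(\<Sum>k<q n. - 2 * \<alpha> * (xerr d t n \<bullet> (ghat_at d t n k - full_grad d t n))) = 0"
    by (simp only: sum_distrib_left[symmetric] inner_sum_right[symmetric] e inner_zero_right mult_zero_right)
  have "(1 / qn) * (\<Sum>k<q n. drift \<delta> cp d t n k)
      = A * ((1 / qn) * (\<Sum>k<q n. (norm (ghat_at d t n k - grad_star n))^2))
        + (1 + \<delta>) * cp * ((1 / qn) * (\<Sum>k<q n. table_err_upd d t n k)) - cp * p - (2 * \<alpha> * \<mu> - \<delta> * \<kappa>2) * d2"
    unfolding s1 s2 using qn1 by (simp add: field_simps)
  also have "\<dots> \<le> A * (2 * L^2 * d2 + 2 * L^2 * p)
        + (1 + \<delta>) * cp * (d2 / qn + (1 - 1 / qn) * p) - cp * p - (2 * \<alpha> * \<mu> - \<delta> * \<kappa>2) * d2"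
    unfolding pe using mult_left_mono[OF ge A0] by linarith
  also have "\<dots> = d2 * (2 * A * L^2 + (1 + \<delta>) * cp / qn - 2 * \<alpha> * \<mu> + \<delta> * \<kappa>2)
        + p * (2 * A * L^2 + \<delta> * cp - (1 + \<delta>) * cp / qn)"
    using qn1 by (simp add: field_simps)
  finally show ?thesis by (simp add: qn_def d2_def p_def)
qed

lemma avg_drift_nonpos:
  assumes "lyap_params \<delta> cp"
  shows "(1 / real (q n)) * (\<Sum>k<q n. drift \<delta> cp d t n k) \<le> 0"
proof -
  define A where "A = \<alpha>/(2*\<eta>) + \<delta> * \<kappa>3"
  define qn where "qn = real (q n)"
  have \<delta>: "\<delta> \<ge> 0" and cp: "cp \<ge> 0"
    and c2: "2 * A * L^2 + \<delta> * cp - cp / qmax \<le> 0"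
    and c3: "2 * A * L^2 + (1 + \<delta>) * cp / qmin - 2 * \<alpha> * \<mu> + \<delta> * \<kappa>2 \<le> 0"
    using assms by (auto simp: lyap_params_def A_def)
  have qmq: "qmin \<le> qn" "qn \<le> qmax" "1 \<le> qn" using qmin_le qmax_ge q_pos[of n] by (auto simp: qn_def)
  have "(1 + \<delta>) * cp / qn \<le> (1 + \<delta>) * cp / qmin"
    by (rule divide_left_mono[OF qmq(1) _ mult_pos_pos[OF _ qmin_pos]]) (use qmq \<delta> cp in auto)
  then have c3': "2 * A * L^2 + (1 + \<delta>) * cp / qn - 2 * \<alpha> * \<mu> + \<delta> * \<kappa>2 \<le> 0"
    using c3 by linarith
  have "cp / qmax \<le> cp / qn"
    by (rule divide_left_mono) (use qmq cp in \<open>auto intro: mult_pos_pos\<close>)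
  also have "\<dots> \<le> (1 + \<delta>) * cp / qn"
    using qmq \<delta> cp by (intro divide_right_mono) (auto simp: algebra_simps)
  finally have c2': "2 * A * L^2 + \<delta> * cp - (1 + \<delta>) * cp / qn \<le> 0" using c2 by linarith
  have "(1 / real (q n)) * (\<Sum>k<q n. drift \<delta> cp d t n k)
    \<le> (norm (xerr d t n))^2 * (2 * A * L^2 + (1 + \<delta>) * cp / qn - 2 * \<alpha> * \<mu> + \<delta> * \<kappa>2)
      + table_err d t n * (2 * A * L^2 + \<delta> * cp - (1 + \<delta>) * cp / qn)"
    unfolding A_def qn_def by (rule avg_drift_le[OF \<delta> cp])
  also have "\<dots> \<le> 0"
    using mult_nonneg_nonpos[OF _ c3'] mult_nonneg_nonpos[OF _ c2'] table_err_nonneg by (simp add: add_nonpos_nonpos)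
  finally show ?thesis .
qed

lemma add_small_mult_nonpos:
  fixes a0 a1 \<delta> :: real
  assumes "a0 < 0" "0 \<le> a1" "0 < \<delta>" "\<delta> \<le> - a0 / (a1 + 1)"
  shows "a0 + \<delta> * a1 \<le> 0"
proof -
  have "\<delta> * a1 \<le> (- a0 / (a1 + 1)) * a1" using assms by (intro mult_right_mono) auto
  also have "\<dots> \<le> - a0" using assms by (simp add: field_simps)
  finally show ?thesis by simp
qed

lemma lyap_cp_exists:
  obtains cp where "cp \<ge> 0" "\<alpha> * L^2 / \<eta> - cp / qmax < 0" "\<alpha> * L^2 / \<eta> + cp / qmin
      - 2 * \<alpha> * \<mu> < 0"
proof -
  have ep: "\<eta> > 0" by (rule eta_pos)
  have q1: "qmin \<ge> 1" by (rule qmin_ge1)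
  have qM: "qmax \<ge> 1" using q1 qmax_ge_qmin by linarith
  define lo where "lo = \<alpha> * L^2 * qmax / \<eta>"
  define hi where "hi = qmin * (2 * \<alpha> * \<mu> - \<alpha> * L^2 / \<eta>)"
  have lohi: "lo < hi"
  proof -
    have pos: "0 < 2 * \<mu> * qmin" by (rule mult_pos_pos) (use \<mu>_pos q1 in linarith)+
    have "L^2 * (qmax + qmin) / (2 * \<mu> * qmin) < \<eta>" by (rule eta_bound)
    then have "L^2 * (qmax + qmin) < \<eta> * (2 * \<mu> * qmin)" using pos by (simp only: pos_divide_less_eq)
    then have "\<alpha> / \<eta> * (L^2 * (qmax + qmin)) < \<alpha> / \<eta> * (\<eta> * (2 * \<mu> * qmin))"
      using \<alpha>_pos ep by (intro mult_strict_left_mono) auto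
    then show ?thesis using ep by (simp add: lo_def hi_def field_simps)
  qed
  define cp where "cp = (lo + hi) / 2"
  show ?thesis
  proof (rule that)
    have "lo \<ge> 0" using \<alpha>_pos ep qM by (simp add: lo_def)
    then show "cp \<ge> 0" using lohi by (simp add: cp_def)
    have "\<alpha> * L^2 / \<eta> = lo / qmax" using qM by (simp add: lo_def)
    also have "\<dots> < cp / qmax" using lohi qM by (intro divide_strict_right_mono) (auto simp: cp_def)
    finally show "\<alpha> * L^2 / \<eta> - cp / qmax < 0" by simp
    have gen: "\<And>Q::real. Q > 0 \<Longrightarrow> \<alpha> * L^2 / \<eta> - 2 * \<alpha> * \<mu> =
        - (Q * (2 * \<alpha> * \<mu> - \<alpha> * L^2 / \<eta>)) / Q"
      by simp
    have "\<alpha> * L^2 / \<eta> - 2 * \<alpha> * \<mu> = - hi / qmin" unfolding hi_def by (rule gen) (use q1 in linarith)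
    moreover have "cp / qmin < hi / qmin"
      using lohi by (intro divide_strict_right_mono[OF _ qmin_pos]) (simp add: cp_def)
    ultimately show "\<alpha> * L^2 / \<eta> + cp / qmin - 2 * \<alpha> * \<mu> < 0" by simp
  qed
qed

lemma lyap_constants: "\<exists>\<delta> cp. lyap_params \<delta> cp"
proof -
  obtain cp where cp0: "cp \<ge> 0" and n2: "\<alpha> * L^2 / \<eta> - cp / qmax < 0"
    and n3: "\<alpha> * L^2 / \<eta> + cp / qmin - 2 * \<alpha> * \<mu> < 0"
    by (rule lyap_cp_exists)
  define a1 where "a1 = - (min_eig_kron Wt TYPE('a) - 2 * \<alpha> * \<eta>)"
  define a2 where "a2 = \<alpha> * L^2 / \<eta> - cp / qmax"
  define a3 where "a3 = \<alpha> * L^2 / \<eta> + cp / qmin - 2 * \<alpha> * \<mu>"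
  define b2 where "b2 = 2 * \<kappa>3 * L^2 + cp"
  define b3 where "b3 = 2 * \<kappa>3 * L^2 + cp / qmin + \<kappa>2"
  have n: "a1 < 0" "a2 < 0" "a3 < 0" using gamma_gt_step n2 n3 by (simp_all add: a1_def a2_def a3_def)
  have b: "\<kappa>1 \<ge> 0" "b2 \<ge> 0" "b3 \<ge> 0" using kappa_nonneg cp0 qmin_ge1 by (auto simp: b2_def b3_def)
  define \<delta> where "\<delta> = min (min (- a1 / (\<kappa>1 + 1)) (- a2 / (b2 + 1))) (- a3 / (b3 + 1))"
  have "- a1 / (\<kappa>1 + 1) > 0" "- a2 / (b2 + 1) > 0" "- a3 / (b3 + 1) > 0"
    using n b by (auto intro!: divide_neg_pos)
  then have "\<delta> > 0" by (simp add: \<delta>_def)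
  have "a1 + \<delta> * \<kappa>1 \<le> 0"
    by (rule add_small_mult_nonpos[OF n(1) b(1) \<open>\<delta> > 0\<close>]) (simp add: \<delta>_def)
  moreover have "a2 + \<delta> * b2 \<le> 0"
    by (rule add_small_mult_nonpos[OF n(2) b(2) \<open>\<delta> > 0\<close>]) (simp add: \<delta>_def)
  moreover have "a3 + \<delta> * b3 \<le> 0"
    by (rule add_small_mult_nonpos[OF n(3) b(3) \<open>\<delta> > 0\<close>]) (simp add: \<delta>_def)
  ultimately have "lyap_params \<delta> cp"
    using \<open>\<delta> > 0\<close> cp0 unfolding lyap_params_def a1_def a2_def a3_def b2_def b3_def
    by (simp add: algebra_simps add_divide_distrib)
  then show ?thesis by blast
qed

lemma gamma_pos: "min_eig_kron Wt TYPE('a) > 0"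
proof -
  have "2 * \<alpha> * \<eta> > 0" using eta_pos \<alpha>_pos by simp
  then show ?thesis using gamma_gt_step by linarith
qed

lemma err_sq_le_lyap: "cp \<ge> 0 \<Longrightarrow> (norm (X d t n - xstar))^2 \<le> lyap cp d t / min_eig_kron Wt TYPE('a)"
proof -
  assume cp: "cp \<ge> 0"
  have g: "min_eig_kron Wt TYPE('a) > 0" by (rule gamma_pos)
  have "(norm (X d t n - xstar))^2 \<le> stack_inner (xerr d t) (xerr d t)"
    using stack_inner_ge_comp[of "xerr d t" n] by (simp add: xerr_def)
  moreover have "min_eig_kron Wt TYPE('a) * stack_inner (xerr d t) (xerr d t) \<le> lyap cp d t"
  proof -
    have "min_eig_kron Wt TYPE('a) * stack_inner (xerr d t) (xerr d t) \<le> stack_inner (xerr d t) (kron Wt (xerr d t))"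
      by (rule gamma_quad_Wt)
    moreover have "0 \<le> stack_inner (serr d t) (kron Bm (serr d t))" by (rule B.psd_stack)
    moreover have "0 \<le> cp * (\<Sum>n\<in>UNIV. table_err d t n)" using cp by (simp add: table_err_def sum_nonneg)
    ultimately show ?thesis by (simp add: lyap_def lyap_core_def)
  qed
  ultimately show ?thesis using g by (simp add: pos_le_divide_eq mult.commute order_trans mult_left_mono)
qed

lemma lyap_cong_past: assumes "\<And>s. s < t \<Longrightarrow> d s = d' s" shows "lyap cp d t = lyap cp d' t"
proof -
  have x: "X d t = X d' t" by (rule X_cong_past[OF assms])
  have y: "Yt d t = Yt d' t" by (rule Yt_cong_past[OF assms])
  have z: "S d t = S d' t" by (rule S_cong_past[OF assms])
  show ?thesis by (simp add: lyap_def lyap_core_def xerr_def serr_def table_err_def x y z)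
qed

lemma drift_cong_past: assumes "\<And>s. s < t \<Longrightarrow> d s = d' s" shows "drift \<delta> cp d t n k
    = drift \<delta> cp d' t n k"
proof -
  have x: "X d t = X d' t" by (rule X_cong_past[OF assms])
  have y: "Yt d t = Yt d' t" by (rule Yt_cong_past[OF assms])
  show ?thesis unfolding drift_def xerr_def ghat_at_def full_grad_def table_err_def table_err_upd_def x y by (rule refl)
qed

end

section \<open>Almost sure rates from geometric decay in mean\<close>

lemma summable_of_nat_mult_power:
  fixes \<rho> :: real assumes r: "0 \<le> \<rho>" "\<rho> < 1"
  shows "summable (\<lambda>t. real t * \<rho>^t)"
proof -
  define c where "c = (1 + \<rho>) / 2"
  have c: "c < 1" "\<rho> < c" using r by (auto simp: c_def)
  define N where "N = nat \<lceil>\<rho> / (c - \<rho>)\<rceil>"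
  show ?thesis
  proof (rule summable_ratio_test[OF c(1)])
    fix n assume n: "N \<le> n"
    have "\<rho> / (c - \<rho>) \<le> real n" using n unfolding N_def by linarith
    then have "\<rho> \<le> real n * (c - \<rho>)" using c(2) by (simp add: pos_divide_le_eq)
    then have a: "(real n + 1) * \<rho> \<le> c * real n" by (simp add: algebra_simps)
    have "norm (real (Suc n) * \<rho> ^ Suc n) = ((real n + 1) * \<rho>) * \<rho>^n" using r by (simp add: algebra_simps)
    also have "\<dots> \<le> (c * real n) * \<rho>^n" using a r by (intro mult_right_mono) auto
    also have "\<dots> = c * norm (real n * \<rho>^n)" using r by simp
    finally show "norm (real (Suc n) * \<rho> ^ Suc n) \<le> c * norm (real n * \<rho> ^ n)" .
  qed
qed

lemma AE_summable_of_summable_integral: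
  fixes g :: "nat \<Rightarrow> 'w \<Rightarrow> real"
  assumes sum: "summable (\<lambda>t. \<integral>\<omega>. g t \<omega> \<partial>M)"
    and int: "\<And>t. integrable M (g t)" and nonneg: "\<And>t \<omega>. 0 \<le> g t \<omega>"
  shows "AE \<omega> in M. summable (\<lambda>t. g t \<omega>)"
proof -
  have [measurable]: "g t \<in> borel_measurable M" for t by (rule borel_measurable_integrable[OF int])
  have "(\<integral>\<^sup>+\<omega>. (\<Sum>t. ennreal (g t \<omega>)) \<partial>M)
      = (\<Sum>t. \<integral>\<^sup>+\<omega>. ennreal (g t \<omega>) \<partial>M)"
    by (rule nn_integral_suminf) measurable
  also have "\<dots> = (\<Sum>t. ennreal (\<integral>\<omega>. g t \<omega> \<partial>M))"
    by (intro suminf_cong nn_integral_eq_integral int) (simp add: nonneg)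
  also have "\<dots> = ennreal (\<Sum>t. \<integral>\<omega>. g t \<omega> \<partial>M)"
    by (rule suminf_ennreal2[OF _ sum]) (simp add: nonneg)
  finally have "(\<integral>\<^sup>+\<omega>. (\<Sum>t. ennreal (g t \<omega>)) \<partial>M) \<noteq> \<infinity>" by simp
  then have "AE \<omega> in M. (\<Sum>t. ennreal (g t \<omega>)) \<noteq> \<infinity>"
    by (rule nn_integral_PInf_AE[rotated]) measurable
  then show ?thesis
    by eventually_elim (intro summable_suminf_not_top nonneg, simp)
qed

lemma tendsto_zero_and_bigo_of_summable_mult:
  fixes F :: "nat \<Rightarrow> real"
  assumes nonneg: "\<And>t. 0 \<le> F t" and sum: "summable (\<lambda>t. real t * F t)"
  shows "F \<longlonglongrightarrow> 0" "F \<in> O(\<lambda>t. 1 / real t)"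
proof -
  have lim: "(\<lambda>t. real t * F t) \<longlonglongrightarrow> 0" by (rule summable_LIMSEQ_zero[OF sum])
  then have "Bseq (\<lambda>t. real t * F t)" by (intro convergent_imp_Bseq convergentI)
  then obtain B where B: "\<And>t. norm (real t * F t) \<le> B" by (rule BseqE) blast
  show "F \<longlonglongrightarrow> 0"
  proof (rule tendsto_sandwich[OF _ _ tendsto_const lim])
    show "\<forall>\<^sub>F t in sequentially. 0 \<le> F t" by (simp add: nonneg)
    show "\<forall>\<^sub>F t in sequentially. F t \<le> real t * F t"
      using eventually_ge_at_top[of 1]
    proof eventually_elim
      fix t :: nat assume "1 \<le> t"
      then have "1 \<le> real t" by simp
      then show "F t \<le> real t * F t" using mult_right_mono[OF \<open>1 \<le> real t\<close> nonneg[of t]] by simp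
    qed
  qed
  show "F \<in> O(\<lambda>t. 1 / real t)"
  proof (rule bigoI)
    show "\<forall>\<^sub>F t in sequentially. norm (F t) \<le> B * norm (1 / real t)"
      using eventually_ge_at_top[of 1]
    proof eventually_elim
      fix t :: nat assume "1 \<le> t"
      then show "norm (F t) \<le> B * norm (1 / real t)"
        using B[of t] nonneg[of t] by (simp add: field_simps)
    qed
  qed
qed

section \<open>Expectations over the random draws\<close>

locale random_draws = prob_space M for M :: "'w measure" +
  fixes I :: "nat \<Rightarrow> 'n::finite \<Rightarrow> 'w \<Rightarrow> nat" and q :: "'n \<Rightarrow> nat"
  assumes q_pos: "\<And>n. q n \<ge> 1"
    and I_meas: "\<And>t n. I t n \<in> measurable M (count_space UNIV)"
    and I_unif: "\<And>t n k. k < q n \<Longrightarrow> measure M {\<omega> \<in> space M. I t n \<omega> = k}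
        = 1 / real (q n)"
    and I_indep: "\<And>t n. indep_set
                    (sigma_sets (space M) {I t n -` A \<inter> space M | A. A \<subseteq> UNIV})
                    (sigma_sets (space M) {I s m -` A \<inter> space M | s m A. s < t \<and> A \<subseteq> UNIV})"
begin

text \<open>Out-of-range values of \<open>I\<close> (a null event) are mapped to \<open>0\<close>, so that \<open>draws \<omega>\<close> is always
  a valid sequence of indices; \<open>draw_set m k\<close> is the set of values of \<open>I\<close> mapped to \<open>k\<close>.\<close>
definition draws :: "'w \<Rightarrow> nat \<Rightarrow> 'n \<Rightarrow> nat" where
  "draws \<omega> = (\<lambda>s m. if I s m \<omega> < q m then I s m \<omega> else 0)"
definition draw_set :: "'n \<Rightarrow> nat \<Rightarrow> nat set" where
  "draw_set m k = (if k = 0 then insert 0 {q m..} else {k})"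
text \<open>A function of the draws before time \<open>T\<close> takes one value per configuration of these
  draws, so its expectation is a finite sum over cylinder sets.\<close>
definition trunc :: "nat \<Rightarrow> (nat \<Rightarrow> 'n \<Rightarrow> nat) \<Rightarrow> (nat \<Rightarrow> 'n \<Rightarrow> nat)" where
  "trunc T d = (\<lambda>s m. if s < T then d s m else 0)"
definition configs :: "nat \<Rightarrow> (nat \<Rightarrow> 'n \<Rightarrow> nat) set" where
  "configs T = (\<lambda>f s m. if s < T then f (s, m) else 0) ` (PiE ({..<T} \<times> UNIV) (\<lambda>p. {..<q (snd p)}))"
definition cylinder :: "nat \<Rightarrow> (nat \<Rightarrow> 'n \<Rightarrow> nat) \<Rightarrow> 'w set" where
  "cylinder T c = {\<omega> \<in> space M. trunc T (draws \<omega>) = c}"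
definition determined_before :: "nat \<Rightarrow> ((nat \<Rightarrow> 'n \<Rightarrow> nat) \<Rightarrow> 'b) \<Rightarrow> bool" where
  "determined_before T H \<longleftrightarrow> (\<forall>d d'. (\<forall>s<T. d s = d' s) \<longrightarrow> H d = H d')"

lemma draws_lt: "draws \<omega> s m < q m"
  using q_pos[of m] by (simp add: draws_def)

lemma draws_eq_iff: "k < q m \<Longrightarrow> (draws \<omega> s m = k) \<longleftrightarrow> I s m \<omega> \<in> draw_set m k"
  by (auto simp: draws_def draw_set_def)

lemma finite_configs: "finite (configs T)"
  unfolding configs_def by (intro finite_imageI finite_PiE) auto

lemma trunc_in_configs: assumes "\<And>s m. d s m < q m" shows "trunc T d \<in> configs T"
proof -
  define f where "f = restrict (\<lambda>p. d (fst p) (snd p)) ({..<T} \<times> UNIV)"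
  have "f \<in> PiE ({..<T} \<times> UNIV) (\<lambda>p. {..<q (snd p)})" using assms by (auto simp: f_def)
  moreover have "trunc T d = (\<lambda>s m. if s < T then f (s, m) else 0)"
    by (simp add: trunc_def f_def fun_eq_iff)
  ultimately show ?thesis unfolding configs_def by blast
qed

lemma configsD: assumes "c \<in> configs T" shows "trunc T c = c" "\<And>s m. s < T \<Longrightarrow> c s m < q m"
proof -
  from assms obtain f where f: "f \<in> PiE ({..<T} \<times> UNIV) (\<lambda>p. {..<q (snd p)})"
    and c: "c = (\<lambda>s m. if s < T then f (s, m) else 0)" by (auto simp: configs_def)
  show "trunc T c = c" by (simp add: c trunc_def fun_eq_iff)
  fix s m assume "s < T"
  then show "c s m < q m" using f by (auto simp: c PiE_def Pi_def)
qed

lemma trunc_draws_in_configs: "trunc T (draws \<omega>) \<in> configs T"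
  by (rule trunc_in_configs) (rule draws_lt)

lemma determined_before_trunc: "determined_before T H \<Longrightarrow> H (trunc T d) = H d"
  unfolding determined_before_def trunc_def by (erule allE, erule allE, erule mp) auto

lemma cylinder_eq:
  assumes c: "c \<in> configs T"
  shows "cylinder T c = space M \<inter> (\<Inter>p\<in>{..<T} \<times> UNIV. I (fst p) (snd p) -` draw_set (snd p) (c (fst p) (snd p)) \<inter> space M)"
proof -
  have "trunc T (draws \<omega>) = c \<longleftrightarrow> (\<forall>s<T. \<forall>m. draws \<omega> s m = c s m)" for \<omega>
  proof
    assume h: "trunc T (draws \<omega>) = c"
    show "\<forall>s<T. \<forall>m. draws \<omega> s m = c s m"
    proof (intro allI impI)
      fix s m assume "s < T"
      have "trunc T (draws \<omega>) s m = c s m" using h by simp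
      then show "draws \<omega> s m = c s m" using \<open>s < T\<close> by (simp add: trunc_def)
    qed
  next
    assume "\<forall>s<T. \<forall>m. draws \<omega> s m = c s m"
    then have "trunc T (draws \<omega>) = trunc T c" by (auto simp: trunc_def fun_eq_iff)
    then show "trunc T (draws \<omega>) = c" using configsD(1)[OF c] by simp
  qed
  moreover have "draws \<omega> s m = c s m \<longleftrightarrow> I s m \<omega> \<in> draw_set m (c s m)" if "s < T" for \<omega> s m
    using draws_eq_iff[OF configsD(2)[OF c that]] .
  ultimately show ?thesis unfolding cylinder_def by auto
qed

lemma vimage_sets: "I s m -` A \<inter> space M \<in> sets M"
  using measurable_sets[OF I_meas] by simp

lemma cylinder_sets: assumes c: "c \<in> configs T" shows "cylinder T c \<in> sets M"
proof (cases "T = 0")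
  case True
  then show ?thesis using cylinder_eq[OF c] by simp
next
  case False
  have "(\<Inter>p\<in>{..<T} \<times> UNIV. I (fst p) (snd p) -` draw_set (snd p) (c (fst p) (snd p)) \<inter> space M) \<in> sets M"
    using False by (intro sets.finite_INT) (auto intro: vimage_sets)
  then show ?thesis using cylinder_eq[OF c] by auto
qed

abbreviation past_gen :: "nat \<Rightarrow> 'w set set" where
  "past_gen t \<equiv> {I s m -` A \<inter> space M | s m A. s < t \<and> A \<subseteq> UNIV}"

lemma sigma_algebra_past: "sigma_algebra (space M) (sigma_sets (space M) (past_gen t))"
  by (rule sigma_algebra_sigma_sets) blast

lemma cylinder_in_past: assumes c: "c \<in> configs T" shows "cylinder T c \<in> sigma_sets (space M) (past_gen T)"
proof -
  interpret S: sigma_algebra "space M" "sigma_sets (space M) (past_gen T)" by (rule sigma_algebra_past)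
  show ?thesis
  proof (cases "T = 0")
    case True
    then show ?thesis unfolding cylinder_eq[OF c] using S.top by simp
  next
    case False
    have "(\<Inter>p\<in>{..<T} \<times> UNIV. I (fst p) (snd p) -` draw_set (snd p) (c (fst p) (snd p)) \<inter> space M)
          \<in> sigma_sets (space M) (past_gen T)"
    proof (rule S.finite_INT)
      show "finite ({..<T} \<times> (UNIV::'n set))" by simp
      have "(0, undefined) \<in> {..<T} \<times> (UNIV::'n set)" using False by simp
      then show "{..<T} \<times> (UNIV::'n set) \<noteq> {}" by blast
      fix p :: "nat \<times> 'n" assume p: "p \<in> {..<T} \<times> UNIV"
      obtain s m where sm: "p = (s, m)" "s < T" using p by (cases p) auto
      have "I s m -` draw_set m (c s m) \<inter> space M \<in> past_gen T"
        by (rule CollectI, rule exI[of _ s], rule exI[of _ m], rule exI[of _ "draw_set m (c s m)"], intro conjI refl sm(2) subset_UNIV)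
      then have "I (fst p) (snd p) -` draw_set (snd p) (c (fst p) (snd p)) \<inter> space M \<in> past_gen T"
        unfolding sm(1) fst_conv snd_conv .
      then show "I (fst p) (snd p) -` draw_set (snd p) (c (fst p) (snd p)) \<inter> space M \<in> sigma_sets (space M) (past_gen T)"
        by (rule sigma_sets.Basic)
    qed
    then have "space M \<inter> (\<Inter>p\<in>{..<T} \<times> UNIV. I (fst p) (snd p) -` draw_set (snd p) (c (fst p) (snd p)) \<inter> space M)
          \<in> sigma_sets (space M) (past_gen T)"
      by (rule S.Int[OF S.top])
    then show ?thesis unfolding cylinder_eq[OF c] .
  qed
qed

lemma determined_decomp:
  assumes p: "determined_before T (H :: (nat \<Rightarrow> 'n \<Rightarrow> nat) \<Rightarrow> real)" and \<omega>: "\<omega> \<in> space M"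
  shows "H (draws \<omega>) = (\<Sum>c\<in>configs T. indicator (cylinder T c) \<omega> * H c)"
proof -
  have "(\<Sum>c\<in>configs T. indicator (cylinder T c) \<omega> * H c)
      = (\<Sum>c\<in>configs T. if c = trunc T (draws \<omega>) then H c else 0)"
    using \<omega> by (intro sum.cong) (auto simp: cylinder_def indicator_def)
  also have "\<dots> = H (trunc T (draws \<omega>))" using finite_configs trunc_draws_in_configs by simp
  also have "\<dots> = H (draws \<omega>)" by (rule determined_before_trunc[OF p])
  finally show ?thesis by simp
qed

lemma emeasure_lt_top: "emeasure M A < \<top>"
  using emeasure_finite[of A] by (simp only: less_top)

lemma integrable_determined:
  assumes p: "determined_before T (H :: (nat \<Rightarrow> 'n \<Rightarrow> nat) \<Rightarrow> real)"
  shows "integrable M (\<lambda>\<omega>. H (draws \<omega>))"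
proof -
  have "integrable M (\<lambda>\<omega>. \<Sum>c\<in>configs T. indicator (cylinder T c) \<omega> * H c)"
    by (intro Bochner_Integration.integrable_sum) (auto intro!: integrable_mult_left integrable_real_indicator cylinder_sets intro: emeasure_lt_top)
  then show ?thesis by (rule Bochner_Integration.integrable_cong[THEN iffD1, rotated -1]) (auto simp: determined_decomp[OF p])
qed

lemma integral_determined:
  assumes p: "determined_before T (H :: (nat \<Rightarrow> 'n \<Rightarrow> nat) \<Rightarrow> real)"
  shows "(\<integral>\<omega>. H (draws \<omega>) \<partial>M) = (\<Sum>c\<in>configs T. prob (cylinder T c) * H c)"
proof -
  have "(\<integral>\<omega>. H (draws \<omega>) \<partial>M)
      = (\<integral>\<omega>. (\<Sum>c\<in>configs T. indicator (cylinder T c) \<omega> * H c) \<partial>M)"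
    by (rule Bochner_Integration.integral_cong) (auto simp: determined_decomp[OF p])
  also have "\<dots> = (\<Sum>c\<in>configs T. (\<integral>\<omega>. indicator (cylinder T c) \<omega> * H c \<partial>M))"
    by (rule Bochner_Integration.integral_sum) (auto intro!: integrable_real_indicator cylinder_sets intro: emeasure_lt_top)
  also have "\<dots> = (\<Sum>c\<in>configs T. prob (cylinder T c) * H c)"
  proof (rule sum.cong[OF refl])
    fix c assume c: "c \<in> configs T"
    have "(\<integral>\<omega>. indicator (cylinder T c) \<omega> * H c \<partial>M)
        = (\<integral>\<omega>. indicator (cylinder T c) \<omega> \<partial>M) * H c"
      by (rule Bochner_Integration.integral_mult_left) (auto intro!: integrable_real_indicator cylinder_sets[OF c] intro: emeasure_lt_top)
    also have "(\<integral>\<omega>. indicator (cylinder T c) \<omega> \<partial>M) = prob (cylinder T c)"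
      using cylinder_sets[OF c] by (simp add: integral_indicator sets.Int_space_eq2)
    finally show "(\<integral>\<omega>. indicator (cylinder T c) \<omega> * H c \<partial>M) = prob (cylinder T c) * H c" .
  qed
  finally show ?thesis .
qed


definition draw_event :: "nat \<Rightarrow> 'n \<Rightarrow> nat \<Rightarrow> 'w set" where
  "draw_event t n k = {\<omega> \<in> space M. draws \<omega> t n = k}"

lemma draw_event_eq: "k < q n \<Longrightarrow> draw_event t n k = I t n -` draw_set n k \<inter> space M"
  using draws_eq_iff by (auto simp: draw_event_def)

lemma draw_event_sets: "k < q n \<Longrightarrow> draw_event t n k \<in> sets M"
  by (simp add: draw_event_eq vimage_sets)

lemma Ieq_sets: "{\<omega> \<in> space M. I t n \<omega> = k} \<in> sets M"
proof -
  have "{\<omega> \<in> space M. I t n \<omega> = k} = I t n -` {k} \<inter> space M" by auto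
  then show ?thesis using vimage_sets by simp
qed

lemma prob_I_ge: "prob {\<omega> \<in> space M. I t n \<omega> \<ge> q n} = 0"
proof -
  define B where "B k = {\<omega> \<in> space M. I t n \<omega> = k}" for k
  have U: "{\<omega> \<in> space M. I t n \<omega> < q n} = (\<Union>k\<in>{..<q n}. B k)" by (auto simp: B_def)
  have "prob (\<Union>k\<in>{..<q n}. B k) = (\<Sum>k\<in>{..<q n}. prob (B k))"
    by (rule finite_measure_finite_Union) (auto simp: B_def Ieq_sets disjoint_family_on_def)
  also have "\<dots> = (\<Sum>k\<in>{..<q n}. 1 / real (q n))" by (simp add: B_def I_unif)
  also have "\<dots> = 1" using q_pos[of n] by simp
  finally have p1: "prob {\<omega> \<in> space M. I t n \<omega> < q n} = 1" using U by simp
  have "{\<omega> \<in> space M. I t n \<omega> \<ge> q n} = space M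
      - {\<omega> \<in> space M. I t n \<omega> < q n}" by auto
  moreover have "{\<omega> \<in> space M. I t n \<omega> < q n} \<in> sets M"
  proof -
    have "{\<omega> \<in> space M. I t n \<omega> < q n} = I t n -` {..<q n} \<inter> space M" by auto
    then show ?thesis using vimage_sets by simp
  qed
  ultimately show ?thesis using prob_compl p1 by simp
qed

lemma AE_I_lt: "AE \<omega> in M. I t n \<omega> < q n"
proof (rule AE_I')
  show "{\<omega> \<in> space M. I t n \<omega> \<ge> q n} \<in> null_sets M"
  proof -
    have s: "{\<omega> \<in> space M. I t n \<omega> \<ge> q n} \<in> sets M"
    proof -
      have "{\<omega> \<in> space M. I t n \<omega> \<ge> q n} = I t n -` {q n..} \<inter> space M" by auto
      then show ?thesis using vimage_sets by simp
    qed
    then show ?thesis using prob_I_ge[where t=t and n=n] by (simp add: null_sets_def emeasure_eq_measure)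
  qed
qed auto

lemma AE_draws: "AE \<omega> in M. draws \<omega> = (\<lambda>s m. I s m \<omega>)"
proof -
  have "AE \<omega> in M. \<forall>s. \<forall>m. I s m \<omega> < q m"
    by (subst AE_all_countable, rule allI, subst AE_all_countable, rule allI, rule AE_I_lt)
  then show ?thesis by eventually_elim (simp add: draws_def fun_eq_iff)
qed

lemma prob_draw_event: assumes k: "k < q n" shows "prob (draw_event t n k) = 1 / real (q n)"
proof (cases "k = 0")
  case False
  then have "draw_event t n k = {\<omega> \<in> space M. I t n \<omega> = k}"
    using draw_event_eq[OF k] by (auto simp: draw_set_def)
  then show ?thesis using I_unif[OF k] by simp
next
  case True
  have "draw_event t n k = {\<omega> \<in> space M. I t n \<omega>
      = 0} \<union> {\<omega> \<in> space M. I t n \<omega> \<ge> q n}"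
    using draw_event_eq[OF k] True by (auto simp: draw_set_def)
  moreover have "prob ({\<omega> \<in> space M. I t n \<omega> = 0} \<union> {\<omega> \<in> space M. I t n \<omega> \<ge> q n})
      = prob {\<omega> \<in> space M. I t n \<omega> = 0} + prob {\<omega> \<in> space M. I t n \<omega> \<ge> q n}"
  proof (rule finite_measure_Union)
    show "{\<omega> \<in> space M. I t n \<omega> = 0} \<in> sets M" by (rule Ieq_sets)
    have "{\<omega> \<in> space M. I t n \<omega> \<ge> q n} = I t n -` {q n..} \<inter> space M" by auto
    then show "{\<omega> \<in> space M. I t n \<omega> \<ge> q n} \<in> sets M" using vimage_sets by simp
    show "{\<omega> \<in> space M. I t n \<omega> = 0} \<inter> {\<omega> \<in> space M. I t n \<omega> \<ge> q n} = {}"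
      using q_pos[of n] by auto
  qed
  ultimately show ?thesis using I_unif[of 0 n t] q_pos[of n] prob_I_ge[where t=t and n=n] True by simp
qed

lemma prob_draw_event_cylinder:
  assumes k: "k < q n" and c: "c \<in> configs t"
  shows "prob (draw_event t n k \<inter> cylinder t c) = prob (cylinder t c) / real (q n)"
proof -
  have a: "draw_event t n k \<in> sigma_sets (space M) {I t n -` A \<inter> space M | A. A \<subseteq> UNIV}"
    unfolding draw_event_eq[OF k] by (rule sigma_sets.Basic) blast
  have "prob (draw_event t n k \<inter> cylinder t c) = prob (draw_event t n k) * prob (cylinder t c)"
    by (rule indep_setD[OF I_indep a cylinder_in_past[OF c]])
  then show ?thesis using prob_draw_event[OF k] by simp
qed

lemma draw_decomp:
  fixes H :: "(nat \<Rightarrow> 'n \<Rightarrow> nat) \<Rightarrow> nat \<Rightarrow> real"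
  assumes p: "\<And>k. determined_before t (\<lambda>d. H d k)" and \<omega>: "\<omega> \<in> space M"
  shows "H (draws \<omega>) (draws \<omega> t n) = (\<Sum>k<q n. \<Sum>c\<in>configs t. indicator (draw_event t n k \<inter> cylinder t c) \<omega> * H c k)"
proof -
  have "(\<Sum>k<q n. \<Sum>c\<in>configs t. indicator (draw_event t n k \<inter> cylinder t c) \<omega> * H c k)
      = (\<Sum>k<q n. indicator (draw_event t n k) \<omega> * (\<Sum>c\<in>configs t. indicator (cylinder t c) \<omega> * H c k))"
    by (simp add: sum_distrib_left indicator_inter_arith mult_ac)
  also have "\<dots> = (\<Sum>k<q n. indicator (draw_event t n k) \<omega> * H (draws \<omega>) k)"
    using determined_decomp[OF p \<omega>] by simp
  also have "\<dots> = (\<Sum>k<q n. if k = draws \<omega> t n then H (draws \<omega>) k else 0)"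
    using \<omega> by (intro sum.cong refl) (simp add: draw_event_def indicator_def)
  also have "\<dots> = H (draws \<omega>) (draws \<omega> t n)" using draws_lt[of \<omega> t n] by simp
  finally show ?thesis by (rule sym)
qed

lemma integrable_draw:
  fixes H :: "(nat \<Rightarrow> 'n \<Rightarrow> nat) \<Rightarrow> nat \<Rightarrow> real"
  assumes p: "\<And>k. determined_before t (\<lambda>d. H d k)"
  shows "integrable M (\<lambda>\<omega>. H (draws \<omega>) (draws \<omega> t n))"
proof -
  have "integrable M (\<lambda>\<omega>. \<Sum>k<q n. \<Sum>c\<in>configs t. indicator (draw_event t n k \<inter> cylinder t c) \<omega> * H c k)"
    by (intro Bochner_Integration.integrable_sum) (auto intro!: integrable_mult_left integrable_real_indicator sets.Int draw_event_sets cylinder_sets intro: emeasure_lt_top)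
  then show ?thesis by (rule Bochner_Integration.integrable_cong[THEN iffD1, rotated -1]) (auto intro: draw_decomp[OF p, symmetric])
qed

lemma integral_draw:
  fixes H :: "(nat \<Rightarrow> 'n \<Rightarrow> nat) \<Rightarrow> nat \<Rightarrow> real"
  assumes p: "\<And>k. determined_before t (\<lambda>d. H d k)"
  shows "(\<integral>\<omega>. H (draws \<omega>) (draws \<omega> t n) \<partial>M)
      = (\<integral>\<omega>. (1 / real (q n)) * (\<Sum>k<q n. H (draws \<omega>) k) \<partial>M)"
proof -
  have ii: "integrable M (\<lambda>\<omega>. indicator (draw_event t n k \<inter> cylinder t c) \<omega> * H c k)" if "k < q n" "c \<in> configs t" for k c
    using that by (auto intro!: integrable_mult_left integrable_real_indicator sets.Int draw_event_sets cylinder_sets intro: emeasure_lt_top)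
  have "(\<integral>\<omega>. H (draws \<omega>) (draws \<omega> t n) \<partial>M)
      = (\<integral>\<omega>. (\<Sum>k<q n. \<Sum>c\<in>configs t. indicator (draw_event t n k \<inter> cylinder t c) \<omega> * H c k) \<partial>M)"
    by (rule Bochner_Integration.integral_cong) (auto intro: draw_decomp[OF p])
  also have "\<dots> = (\<Sum>k<q n. \<integral>\<omega>. (\<Sum>c\<in>configs t. indicator (draw_event t n k \<inter> cylinder t c) \<omega> * H c k) \<partial>M)"
    by (rule Bochner_Integration.integral_sum) (use ii in \<open>auto intro!: Bochner_Integration.integrable_sum\<close>)
  also have "\<dots> = (\<Sum>k<q n. \<Sum>c\<in>configs t. \<integral>\<omega>. indicator (draw_event t n k \<inter> cylinder t c) \<omega> * H c k \<partial>M)"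
    by (rule sum.cong[OF refl], rule Bochner_Integration.integral_sum) (use ii in auto)
  also have "\<dots> = (\<Sum>k<q n. \<Sum>c\<in>configs t. prob (draw_event t n k \<inter> cylinder t c) * H c k)"
  proof (intro sum.cong refl)
    fix k c assume kc: "k \<in> {..<q n}" "c \<in> configs t"
    have S: "draw_event t n k \<inter> cylinder t c \<in> sets M"
      using kc by (auto intro!: sets.Int draw_event_sets cylinder_sets)
    have "(\<integral>\<omega>. indicator (draw_event t n k \<inter> cylinder t c) \<omega> * H c k \<partial>M)
        = (\<integral>\<omega>. indicator (draw_event t n k \<inter> cylinder t c) \<omega> \<partial>M) * H c k"
      by (rule Bochner_Integration.integral_mult_left) (auto intro!: integrable_real_indicator S intro: emeasure_lt_top)
    also have "(\<integral>\<omega>. indicator (draw_event t n k \<inter> cylinder t c) \<omega> \<partial>M)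
        = prob (draw_event t n k \<inter> cylinder t c)"
      using S by (simp add: integral_indicator sets.Int_space_eq2)
    finally show "(\<integral>\<omega>. indicator (draw_event t n k \<inter> cylinder t c) \<omega> * H c k \<partial>M) = prob (draw_event t n k \<inter> cylinder t c) * H c k" .
  qed
  also have "\<dots> = (\<Sum>k<q n. (1 / real (q n)) * (\<Sum>c\<in>configs t. prob (cylinder t c) * H c k))"
    by (intro sum.cong refl) (simp add: prob_draw_event_cylinder sum_distrib_left)
  also have "\<dots> = (\<Sum>k<q n. (1 / real (q n)) * (\<integral>\<omega>. H (draws \<omega>) k \<partial>M))"
    by (intro sum.cong refl) (simp add: integral_determined[OF p])
  also have "\<dots> = (1 / real (q n)) * (\<Sum>k<q n. (\<integral>\<omega>. H (draws \<omega>) k \<partial>M))"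
    by (simp add: sum_distrib_left)
  also have "\<dots> = (1 / real (q n)) * (\<integral>\<omega>. (\<Sum>k<q n. H (draws \<omega>) k) \<partial>M)"
    by (subst Bochner_Integration.integral_sum) (auto intro: integrable_determined[OF p])
  also have "\<dots> = (\<integral>\<omega>. (1 / real (q n)) * (\<Sum>k<q n. H (draws \<omega>) k) \<partial>M)"
    by (rule Bochner_Integration.integral_mult_right[symmetric]) (auto intro: integrable_determined[OF p])
  finally show ?thesis .
qed


lemma expected_drift_nonpos:
  fixes h :: "(nat \<Rightarrow> 'n \<Rightarrow> nat) \<Rightarrow> nat \<Rightarrow> real"
  assumes hp: "\<And>k. determined_before t (\<lambda>d. h d k)"
    and avg: "\<And>d. (1 / real (q n)) * (\<Sum>k<q n. h d k) \<le> 0"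
  shows "(\<integral>\<omega>. h (draws \<omega>) (draws \<omega> t n) \<partial>M) \<le> 0"
proof -
  have "(\<integral>\<omega>. h (draws \<omega>) (draws \<omega> t n) \<partial>M)
      = (\<integral>\<omega>. (1 / real (q n)) * (\<Sum>k<q n. h (draws \<omega>) k) \<partial>M)"
    by (rule integral_draw[OF hp])
  also have "\<dots> \<le> (\<integral>\<omega>. 0 \<partial>M)"
  proof (rule Bochner_Integration.integral_mono)
    show "integrable M (\<lambda>\<omega>. (1 / real (q n)) * (\<Sum>k<q n. h (draws \<omega>) k))"
      by (intro integrable_mult_right Bochner_Integration.integrable_sum integrable_determined[OF hp])
    show "(1 / real (q n)) * (\<Sum>k<q n. h (draws \<omega>) k) \<le> 0" for \<omega> by (rule avg)
  qed simp
  finally show ?thesis by simp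
qed

lemma expected_geometric_decay:
  fixes V :: "(nat \<Rightarrow> 'n \<Rightarrow> nat) \<Rightarrow> nat \<Rightarrow> real" and h :: "(nat \<Rightarrow> 'n \<Rightarrow> nat) \<Rightarrow> nat \<Rightarrow> 'n \<Rightarrow> nat \<Rightarrow> real"
  assumes Vp: "\<And>t. determined_before t (\<lambda>d. V d t)" and hp: "\<And>t n k. determined_before t (\<lambda>d. h d t n k)"
    and step: "\<And>d t. (\<And>s m. d s m < q m) \<Longrightarrow> (1 + \<delta>) * V d (Suc t) \<le> V d t
        + (\<Sum>n\<in>UNIV. h d t n (d t n))"
    and avg: "\<And>d t n. (1 / real (q n)) * (\<Sum>k<q n. h d t n k) \<le> 0" and \<delta>: "\<delta> > 0"
  shows "(\<integral>\<omega>. V (draws \<omega>) t \<partial>M)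
      \<le> (\<integral>\<omega>. V (draws \<omega>) 0 \<partial>M) / (1 + \<delta>)^t"
proof (induction t)
  case 0 then show ?case by simp
next
  case (Suc t)
  have iV: "integrable M (\<lambda>\<omega>. V (draws \<omega>) u)" for u by (rule integrable_determined[OF Vp])
  have ih: "integrable M (\<lambda>\<omega>. h (draws \<omega>) t n (draws \<omega> t n))" for n
    by (rule integrable_draw[where H="\<lambda>d k. h d t n k"]) (rule hp)
  have "(1 + \<delta>) * (\<integral>\<omega>. V (draws \<omega>) (Suc t) \<partial>M)
      = (\<integral>\<omega>. (1 + \<delta>) * V (draws \<omega>) (Suc t) \<partial>M)"
    by (rule Bochner_Integration.integral_mult_right[symmetric]) (rule iV)
  also have "\<dots> \<le> (\<integral>\<omega>. V (draws \<omega>) t + (\<Sum>n\<in>UNIV. h (draws \<omega>) t n (draws \<omega> t n)) \<partial>M)"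
    by (rule Bochner_Integration.integral_mono)
      (auto intro!: Bochner_Integration.integrable_add Bochner_Integration.integrable_sum iV ih step draws_lt)
  also have "\<dots> = (\<integral>\<omega>. V (draws \<omega>) t \<partial>M)
      + (\<Sum>n\<in>UNIV. \<integral>\<omega>. h (draws \<omega>) t n (draws \<omega> t n) \<partial>M)"
    by (subst Bochner_Integration.integral_add)
      (auto intro!: iV ih Bochner_Integration.integrable_sum Bochner_Integration.integral_sum)
  also have "\<dots> \<le> (\<integral>\<omega>. V (draws \<omega>) t \<partial>M)"
    using expected_drift_nonpos[where h="\<lambda>d k. h d t _ k", OF hp avg] by (simp add: sum_nonpos)
  also have "\<dots> \<le> (\<integral>\<omega>. V (draws \<omega>) 0 \<partial>M) / (1 + \<delta>)^t" by (rule Suc.IH)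
  finally have "(\<integral>\<omega>. V (draws \<omega>) (Suc t) \<partial>M)
      \<le> (\<integral>\<omega>. V (draws \<omega>) 0 \<partial>M) / (1 + \<delta>)^t / (1 + \<delta>)"
    using \<delta> by (simp add: pos_le_divide_eq mult_ac)
  then show ?case by (simp add: divide_divide_eq_left mult.commute)
qed

lemma AE_rate_of_geometric_mean:
  fixes F :: "nat \<Rightarrow> (nat \<Rightarrow> 'n \<Rightarrow> nat) \<Rightarrow> real"
  assumes Fp: "\<And>t. determined_before t (F t)" and F0: "\<And>t d. 0 \<le> F t d"
    and Fb: "\<And>t. (\<integral>\<omega>. F t (draws \<omega>) \<partial>M) \<le> C * \<rho>^t" and r: "0
        \<le> \<rho>" "\<rho> < 1"
  shows "AE \<omega> in M. (\<lambda>t. F t (draws \<omega>)) \<longlonglongrightarrow> 0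
      \<and> (\<lambda>t. F t (draws \<omega>)) \<in> O(\<lambda>t. 1 / real t)"
proof -
  have "summable (\<lambda>t. real t * \<rho>^t * C)"
    using summable_of_nat_mult_power[OF r] by (rule summable_mult2)
  moreover have "norm (\<integral>\<omega>. real t * F t (draws \<omega>) \<partial>M) \<le> real t * \<rho>^t * C" for t
  proof -
    have "0 \<le> (\<integral>\<omega>. F t (draws \<omega>) \<partial>M)"
      by (rule Bochner_Integration.integral_nonneg) (simp add: F0)
    moreover have "(\<integral>\<omega>. real t * F t (draws \<omega>) \<partial>M)
        = real t * (\<integral>\<omega>. F t (draws \<omega>) \<partial>M)"
      by (rule Bochner_Integration.integral_mult_right) (rule integrable_determined[OF Fp])
    ultimately show ?thesis using mult_left_mono[OF Fb[of t], of "real t"] by (simp add: mult_ac)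
  qed
  ultimately have "summable (\<lambda>t. \<integral>\<omega>. real t * F t (draws \<omega>) \<partial>M)"
    by (rule summable_comparison_test'[where N=0])
  then have "AE \<omega> in M. summable (\<lambda>t. real t * F t (draws \<omega>))"
    by (rule AE_summable_of_summable_integral[where g="\<lambda>t \<omega>. real t * F t (draws \<omega>)"])
      (simp_all add: integrable_determined[OF Fp] F0)
  then show ?thesis
  proof eventually_elim
    case (elim \<omega>)
    show ?case using tendsto_zero_and_bigo_of_summable_mult[OF F0 elim] by blast
  qed
qed

end

lemma tendsto_of_norm_diff_sq:
  fixes z :: "nat \<Rightarrow> 'a::real_normed_vector"
  assumes "(\<lambda>t. (norm (z t - x))\<^sup>2) \<longlonglongrightarrow> 0"
  shows "z \<longlonglongrightarrow> x"
proof -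
  have "(\<lambda>t. sqrt ((norm (z t - x))\<^sup>2)) \<longlonglongrightarrow> sqrt 0" using assms by (rule tendsto_real_sqrt)
  then have "(\<lambda>t. z t - x) \<longlonglongrightarrow> 0" by (simp add: tendsto_norm_zero_iff)
  then show ?thesis by (rule LIM_zero_cancel)
qed

locale dsa_random = dsa_setting W Wt q f grad \<mu> L \<eta> \<alpha> xstar x0 + random_draws M I q
  for W Wt :: "'n::finite \<Rightarrow> 'n \<Rightarrow> real" and q :: "'n \<Rightarrow> nat"
    and f :: "'n \<Rightarrow> nat \<Rightarrow> 'a::euclidean_space \<Rightarrow> real" and grad :: "'n \<Rightarrow> nat \<Rightarrow> 'a \<Rightarrow> 'a"
    and \<mu> L \<eta> \<alpha> :: real and xstar :: 'a and x0 :: "'n \<Rightarrow> 'a"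
    and M :: "'w measure" and I :: "nat \<Rightarrow> 'n \<Rightarrow> 'w \<Rightarrow> nat"
begin

lemma err_sq_determined: "determined_before t (\<lambda>d. (norm (X d t n - xstar))\<^sup>2)"
  unfolding determined_before_def by (metis X_cong_past)

lemma expected_err_sq_geometric:
  obtains C \<rho> :: real where "0 \<le> \<rho>" "\<rho> < 1"
    "\<And>t. (\<integral>\<omega>. (norm (X (draws \<omega>) t n - xstar))\<^sup>2 \<partial>M) \<le> C * \<rho>^t"
proof -
  obtain \<delta> cp where params: "lyap_params \<delta> cp" using lyap_constants by blast
  then have \<delta>cp: "\<delta> > 0" "cp \<ge> 0" by (auto simp: lyap_params_def)
  define \<gamma> where "\<gamma> = min_eig_kron Wt TYPE('a)"
  have "\<gamma> > 0" unfolding \<gamma>_def by (rule gamma_pos)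
  define C0 where "C0 = (\<integral>\<omega>. lyap cp (draws \<omega>) 0 \<partial>M)"
  have lyap_before: "determined_before t (\<lambda>d. lyap cp d t)" for t
    unfolding determined_before_def using lyap_cong_past by blast
  have decay: "(\<integral>\<omega>. lyap cp (draws \<omega>) t \<partial>M) \<le> C0 / (1 + \<delta>)^t" for t
    unfolding C0_def
  proof (rule expected_geometric_decay[OF lyap_before _ _ _ \<delta>cp(1)])
    show "determined_before t (\<lambda>d. drift \<delta> cp d t n k)" for t n k
      unfolding determined_before_def using drift_cong_past by blast
    show "(1 + \<delta>) * lyap cp d (Suc t) \<le> lyap cp d t + (\<Sum>n\<in>UNIV. drift \<delta> cp d t n (d t n))" for d t
      by (rule lyap_drift_step[OF params])
    show "(1 / real (q n)) * (\<Sum>k<q n. drift \<delta> cp d t n k) \<le> 0" for d t n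
      by (rule avg_drift_nonpos[OF params])
  qed
  have "(\<integral>\<omega>. (norm (X (draws \<omega>) t n - xstar))\<^sup>2 \<partial>M)
      \<le> (C0 / \<gamma>) * (1 / (1 + \<delta>))^t" for t
  proof -
    have "(\<integral>\<omega>. (norm (X (draws \<omega>) t n - xstar))\<^sup>2 \<partial>M)
        \<le> (\<integral>\<omega>. lyap cp (draws \<omega>) t / \<gamma> \<partial>M)"
    proof (rule integral_mono)
      show "integrable M (\<lambda>\<omega>. (norm (X (draws \<omega>) t n - xstar))\<^sup>2)"
        by (rule integrable_determined[OF err_sq_determined])
      show "integrable M (\<lambda>\<omega>. lyap cp (draws \<omega>) t / \<gamma>)"
        using integrable_determined[OF lyap_before] by simp
      show "(norm (X (draws \<omega>) t n - xstar))\<^sup>2 \<le> lyap cp (draws \<omega>) t / \<gamma>" for \<omega>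
        unfolding \<gamma>_def by (rule err_sq_le_lyap[OF \<delta>cp(2)])
    qed
    also have "\<dots> = (\<integral>\<omega>. lyap cp (draws \<omega>) t \<partial>M) / \<gamma>" by simp
    also have "\<dots> \<le> (C0 / (1 + \<delta>)^t) / \<gamma>"
      by (rule divide_right_mono[OF decay]) (use \<open>\<gamma> > 0\<close> in linarith)
    also have "\<dots> = (C0 / \<gamma>) * (1 / (1 + \<delta>))^t" by (simp add: power_divide)
    finally show ?thesis .
  qed
  then show ?thesis using that[of "1 / (1 + \<delta>)" "C0 / \<gamma>"] \<delta>cp(1) by auto
qed

lemma AE_err_sq_tendsto_bigo:
  "AE \<omega> in M. (\<lambda>t. (norm (X (\<lambda>s m. I s m \<omega>) t n - xstar))\<^sup>2) \<longlonglongrightarrow> 0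
             \<and> (\<lambda>t. (norm (X (\<lambda>s m. I s m \<omega>) t n - xstar))\<^sup>2) \<in> O(\<lambda>t. 1 / real t)"
proof -
  obtain \<rho> C where \<rho>: "0 \<le> \<rho>" "\<rho> < 1"
    and bound: "\<And>t. (\<integral>\<omega>. (norm (X (draws \<omega>) t n - xstar))\<^sup>2 \<partial>M)
        \<le> C * \<rho>^t"
    by (rule expected_err_sq_geometric[where n=n]) blast
  have "AE \<omega> in M. (\<lambda>t. (norm (X (draws \<omega>) t n - xstar))\<^sup>2) \<longlonglongrightarrow> 0
                 \<and> (\<lambda>t. (norm (X (draws \<omega>) t n - xstar))\<^sup>2) \<in> O(\<lambda>t. 1 / real t)"
    by (rule AE_rate_of_geometric_mean[where F="\<lambda>t d. (norm (X d t n - xstar))\<^sup>2",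
        OF err_sq_determined _ bound \<rho>]) simp
  with AE_draws show ?thesis by eventually_elim simp
qed

end

theorem theorem8:
  fixes E :: "'n::finite \<Rightarrow> 'n \<Rightarrow> bool"
    and W Wt :: "'n \<Rightarrow> 'n \<Rightarrow> real"
    and q :: "'n \<Rightarrow> nat"
    and f :: "'n \<Rightarrow> nat \<Rightarrow> 'a::euclidean_space \<Rightarrow> real"
    and grad :: "'n \<Rightarrow> nat \<Rightarrow> 'a \<Rightarrow> 'a"
    and \<mu> L \<eta> \<alpha> :: real
    and xstar :: 'a
    and x0 :: "'n \<Rightarrow> 'a"
    and M :: "'w measure"
    and I :: "nat \<Rightarrow> 'n \<Rightarrow> 'w \<Rightarrow> nat"
  assumes E_sym: "\<And>n m. E n m \<Longrightarrow> E m n"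
    and E_irrefl: "\<And>n. \<not> E n n"
    and E_conn: "\<And>n m. E\<^sup>*\<^sup>* n m"
    and W_supp: "\<And>n m. W n m \<noteq> 0 \<Longrightarrow> m = n \<or> E n m"
    and Wt_supp: "\<And>n m. Wt n m \<noteq> 0 \<Longrightarrow> m = n \<or> E n m"
    and W_sym: "\<And>n m. W n m = W m n"
    and Wt_sym: "\<And>n m. Wt n m = Wt m n"
    and null_Wt: "\<And>v::'n \<Rightarrow> real. (\<exists>c. \<forall>n. v n = c)
        \<Longrightarrow> (\<forall>n. v n - (\<Sum>m\<in>UNIV. Wt n m * v m) = 0)"
    and null_W: "\<And>v::'n \<Rightarrow> real. (\<forall>n. v n - (\<Sum>m\<in>UNIV. W n m * v m) = 0) \<longleftrightarrow> (\<exists>c. \<forall>n. v n = c)"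
    and null_WtW: "\<And>v::'n \<Rightarrow> real. (\<forall>n. (\<Sum>m\<in>UNIV. (Wt n m - W n m) * v m) = 0) \<longleftrightarrow> (\<exists>c. \<forall>n. v n = c)"
    and W_le_Wt: "\<And>v. quad W v \<le> quad Wt v"
    and Wt_le: "\<And>v. quad Wt v \<le> quad (\<lambda>n m. ((if n = m then 1 else 0) + W n m) / 2) v"
    and Wt_pos: "\<And>v. (\<exists>n. v n \<noteq> 0) \<Longrightarrow> quad Wt v > 0"
    and q_pos: "\<And>n. q n \<ge> 1"
    and \<mu>_pos: "\<mu> > 0"
    and f_grad: "\<And>n i x. i < q n \<Longrightarrow> (f n i has_derivative (\<lambda>h. grad n i x \<bullet> h)) (at x)"
    and f_sc: "\<And>n i. i < q n \<Longrightarrow> strongly_convex \<mu> (f n i)"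
    and f_lip: "\<And>n i. i < q n \<Longrightarrow> L-lipschitz_on UNIV (grad n i)"
    and xstar_min: "\<And>x. (\<Sum>n\<in>UNIV. (1 / real (q n)) * (\<Sum>i<q n. f n i xstar))
                        \<le> (\<Sum>n\<in>UNIV. (1 / real (q n)) * (\<Sum>i<q n. f n i x))"
    and \<eta>_gt: "\<eta> > L\<^sup>2 * real (Max (range q)) / (\<mu> * real (Min (range q))) + L\<^sup>2 / \<mu> - L"
    and \<alpha>_pos: "\<alpha> > 0"
    and \<alpha>_lt: "\<alpha> < min_eig_kron Wt TYPE('a) / (2 * \<eta>)"
    and M_prob: "prob_space M"
    and I_meas: "\<And>t n. I t n \<in> measurable M (count_space UNIV)"
    and I_unif: "\<And>t n k. k < q n \<Longrightarrow> measure M {\<omega> \<in> space M. I t n \<omega> = k}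
        = 1 / real (q n)"
    and I_indep: "\<And>t n. prob_space.indep_set M
                    (sigma_sets (space M) {I t n -` A \<inter> space M | A. A \<subseteq> UNIV})
                    (sigma_sets (space M) {I s m -` A \<inter> space M | s m A. s < t \<and> A \<subseteq> UNIV})"
  shows "\<forall>n. (AE \<omega> in M. (\<lambda>t. dsa_x W Wt \<alpha> grad q x0 (\<lambda>s m. I s m \<omega>) t n) \<longlonglongrightarrow> xstar)
           \<and> (AE \<omega> in M. (\<lambda>t. (norm (dsa_x W Wt \<alpha> grad q x0 (\<lambda>s m. I s m \<omega>) t n - xstar))\<^sup>2)
                           \<in> O(\<lambda>t. 1 / real t))"
proof -
  interpret dsa_random W Wt q f grad \<mu> L \<eta> \<alpha> xstar x0 M I
    by (intro dsa_random.intro dsa_setting.intro random_draws.intro random_draws_axioms.intro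
        M_prob q_pos I_meas I_unif I_indep) (fact assms)+
  show ?thesis
  proof (intro allI conjI)
    fix n
    note AE = AE_err_sq_tendsto_bigo[of n, unfolded X_def]
    show "AE \<omega> in M. (\<lambda>t. dsa_x W Wt \<alpha> grad q x0 (\<lambda>s m. I s m \<omega>) t n) \<longlonglongrightarrow> xstar"
      using AE by eventually_elim (blast intro: tendsto_of_norm_diff_sq)
    show "AE \<omega> in M. (\<lambda>t. (norm (dsa_x W Wt \<alpha> grad q x0 (\<lambda>s m. I s m \<omega>) t n - xstar))\<^sup>2)
                       \<in> O(\<lambda>t. 1 / real t)"
      using AE by eventually_elim blast
  qed
qed

end
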